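(* For $x\in X$ and $z\in\mathbb{T}$ define $\psi_{x,z}\big(\sum_k f_k\delta^k\big)=\sum_k f_k(x)z^k$ for $\sum_k f_k\delta^k\in C(X)'_1$. Then $\psi:(x,z)\mapsto\psi_{x,z}$ is a continuous surjection $X\times\mathbb{T}\to\Delta(C(X)'_1)$, and $\Delta(C(X)'_1)$ is the topological quotient of $X\times\mathbb{T}$ via $\psi$. The fibers are: (i) for $x\notin\bigcup_{q\ge1}\mathrm{Fix}_q(\sigma)^\circ$: $\psi^{-1}(\{\omega_x\})=\{x\}\times\mathbb{T}$; (ii) for $x\in\bigcup_{q\ge1}\mathrm{Fix}_q(\sigma)^\circ$ and $c\in\mathbb{T}$: $\psi^{-1}(\{\omega_{x,c}\})=\{(x,z):z\in\mathbb{T},\ z^n=c\}$, where $n$ is the minimal $n\ge1$ such that $x\in\mathrm{Fix}_n(\sigma)^\circ$.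
   Context: Let $X$ be a non-empty compact Hausdorff space and $\sigma:X\to X$ a homeomorphism. For $n\in\mathbb{Z}$ let $\mathrm{Fix}_n(\sigma)=\{x:\sigma^nx=x\}$; a superscript $\circ$ denotes interior, $\mathrm{supp}(f)$ the closure of $\{f\ne0\}$. $C(X)$ is the algebra of continuous complex functions with sup norm, $\alpha(f)=f\circ\sigma^{-1}$. $\ell^1(\Sigma)$ is the set of $\ell:\mathbb{Z}\to C(X)$ with $\|\ell\|=\sum_k\|\ell(k)\|_\infty<\infty$, product $(\ell\ell')(n)=\sum_k\ell(k)\alpha^k(\ell'(n-k))$, involution $\ell^*(n)=\overline{\alpha^n(\ell(-n))}$. With $\delta$ the element equal to the constant $1$ at $1\in\mathbb{Z}$ and $0$ elsewhere, each element is uniquely $\sum_k f_k\delta^k$, $f_k=\ell(k)$. $C(X)'_1$, the commutant of $C(X)$ (embedded as $\{f\delta^0\}$) in $\ell^1(\Sigma)$, equals $\{\sum_kf_k\delta^k:\mathrm{supp}(f_k)\subset\mathrm{Fix}_k(\sigma)\ \forall k\}$ and is commutative; $\Delta(C(X)'_1)$ is its maximal ideal space with the Gelfand topology. For $x\notin\bigcup_{q\ge1}\mathrm{Fix}_q(\sigma)^\circ$, $\omega_x$ is the character $\sum_kf_k\delta^k\mapsto f_0(x)$; for $x\in\bigcup_{q\ge1}\mathrm{Fix}_q(\sigma)^\circ$ and $c\in\mathbb{T}$, $\omega_{x,c}$ is the character $\sum_kf_k\delta^k\mapsto\sum_jf_{jn}(x)c^j$, with $n$ the minimal $n\ge1$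 such that $x\in\mathrm{Fix}_n(\sigma)^\circ$. These are exactly all characters of $C(X)'_1$, without repetition. *)

theory Defs
  imports "HOL-Analysis.Analysis"
begin

definition ipow :: "('a \<Rightarrow> 'a) \<Rightarrow> int \<Rightarrow> 'a \<Rightarrow> 'a" where
  "ipow \<sigma> n = (if 0 \<le> n then \<sigma> ^^ nat n else inv \<sigma> ^^ nat (- n))"

definition Fix :: "('a \<Rightarrow> 'a) \<Rightarrow> int \<Rightarrow> 'a set" where
  "Fix \<sigma> n = {x. ipow \<sigma> n x = x}"

definition supn :: "('a \<Rightarrow> complex) \<Rightarrow> real" where
  "supn f = (SUP x. cmod (f x))"

definition l1 :: "(int \<Rightarrow> 'a::topological_space \<Rightarrow> complex) set" where
  "l1 = {F. (\<forall>k. continuous_on UNIV (F k)) \<and> (\<lambda>k. supn (F k)) summable_on UNIV}"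

text \<open>Twisted convolution product: (l l')(n) = sum_k l(k) alpha^k(l'(n-k)),
  with alpha(f) = f o sigma^{-1}, so alpha^k(f) = f o sigma^{-k}.\<close>
definition l1mult :: "('a \<Rightarrow> 'a) \<Rightarrow> (int \<Rightarrow> 'a \<Rightarrow> complex) \<Rightarrow> (int \<Rightarrow> 'a \<Rightarrow> complex)
    \<Rightarrow> (int \<Rightarrow> 'a \<Rightarrow> complex)" where
  "l1mult \<sigma> F G = (\<lambda>n x. \<Sum>\<^sub>\<infinity>k. F k x * G (n - k) (ipow \<sigma> (- k) x))"

definition emb :: "('a \<Rightarrow> complex) \<Rightarrow> (int \<Rightarrow> 'a \<Rightarrow> complex)" where
  "emb f = (\<lambda>k. if k = 0 then f else (\<lambda>_. 0))"

definition Comm :: "('a::topological_space \<Rightarrow> 'a) \<Rightarrow> (int \<Rightarrow> 'a \<Rightarrow> complex) set" where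
  "Comm \<sigma> = {F \<in> l1. \<forall>f. continuous_on UNIV f \<longrightarrow> l1mult \<sigma> (emb f) F = l1mult \<sigma> F (emb f)}"

definition characters :: "('a::topological_space \<Rightarrow> 'a) \<Rightarrow> ((int \<Rightarrow> 'a \<Rightarrow> complex) \<Rightarrow> complex) set" where
  "characters \<sigma> = {\<phi> \<in> extensional (Comm \<sigma>).
     (\<exists>F \<in> Comm \<sigma>. \<phi> F \<noteq> 0) \<and>
     (\<forall>F \<in> Comm \<sigma>. \<forall>G \<in> Comm \<sigma>. \<phi> (\<lambda>k x. F k x + G k x) = \<phi> F + \<phi> G \<and>
                              \<phi> (l1mult \<sigma> F G) = \<phi> F * \<phi> G) \<and>
     (\<forall>F \<in> Comm \<sigma>. \<forall>c. \<phi> (\<lambda>k x. c * F k x) = c * \<phi> F)}"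

text \<open>Gelfand topology = weak-* topology = topology of pointwise convergence on C(X)'_1.\<close>
definition gelfand_top :: "('a::topological_space \<Rightarrow> 'a) \<Rightarrow> ((int \<Rightarrow> 'a \<Rightarrow> complex) \<Rightarrow> complex) topology" where
  "gelfand_top \<sigma> = subtopology (product_topology (\<lambda>_. euclidean) (Comm \<sigma>)) (characters \<sigma>)"

definition XT :: "('a::topological_space \<times> complex) topology" where
  "XT = prod_topology euclidean (top_of_set (sphere 0 1))"

definition psi :: "('a::topological_space \<Rightarrow> 'a) \<Rightarrow> 'a \<times> complex \<Rightarrow> ((int \<Rightarrow> 'a \<Rightarrow> complex) \<Rightarrow> complex)" where
  "psi \<sigma> = (\<lambda>(x, z). restrict (\<lambda>F. \<Sum>\<^sub>\<infinity>k. F k x * z powi k) (Comm \<sigma>))"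

definition Per :: "('a::topological_space \<Rightarrow> 'a) \<Rightarrow> 'a set" where
  "Per \<sigma> = (\<Union>q\<in>{1::nat..}. interior (Fix \<sigma> (int q)))"

definition nmin :: "('a::topological_space \<Rightarrow> 'a) \<Rightarrow> 'a \<Rightarrow> nat" where
  "nmin \<sigma> x = (LEAST n::nat. 1 \<le> n \<and> x \<in> interior (Fix \<sigma> (int n)))"

definition omega1 :: "('a::topological_space \<Rightarrow> 'a) \<Rightarrow> 'a \<Rightarrow> ((int \<Rightarrow> 'a \<Rightarrow> complex) \<Rightarrow> complex)" where
  "omega1 \<sigma> x = restrict (\<lambda>F. F 0 x) (Comm \<sigma>)"

definition omega2 :: "('a::topological_space \<Rightarrow> 'a) \<Rightarrow> 'a \<Rightarrow> complex \<Rightarrow> ((int \<Rightarrow> 'a \<Rightarrow> complex) \<Rightarrow> complex)" where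
  "omega2 \<sigma> x c = restrict (\<lambda>F. \<Sum>\<^sub>\<infinity>j. F (j * int (nmin \<sigma> x)) x * c powi j) (Comm \<sigma>)"

end

theory Submission
  imports Defs
begin

text \<open>
  Since every coefficient F k of an element of the commutant lives on Fix k, the twisted product
  on the commutant is the ordinary Cauchy product pointwise in x, so each psi x z is a character.
  Conversely, a character is bounded by the l1 norm (a Neumann series argument) and is therefore
  determined by its values on the monomials f delta^k. On C(X) it is evaluation at a point x, and
  it annihilates every monomial whose coefficient vanishes at x; this leaves only the exponents k
  with x in the interior of Fix k, which are the multiples of the minimal period n, and on these
  the character acts as z^k for an n-th root z of its value at u delta^n, u a bump function at x.
  Finally psi is continuous from the compact space X \<times> T onto the Hausdorff Gelfand space, hence
  a closed map and a quotient map.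
\<close>

section \<open>Summation lemmas\<close>

lemma summable_on_norm_bound:
  fixes g :: "'i \<Rightarrow> 'c::banach"
  assumes "M summable_on A" "\<And>k. k \<in> A \<Longrightarrow> norm (g k) \<le> M k"
  shows "g summable_on A"
  by (rule abs_summable_summable, rule summable_on_comparison_test[OF assms(1)]) (use assms(2) in auto)

lemma norm_infsum_bound:
  fixes g :: "'i \<Rightarrow> 'c::banach"
  assumes "M summable_on A" "\<And>k. k \<in> A \<Longrightarrow> norm (g k) \<le> M k"
  shows "norm (infsum g A) \<le> infsum M A"
  by (rule norm_infsum_le[OF has_sum_infsum[OF summable_on_norm_bound[OF assms]]
        has_sum_infsum[OF assms(1)]]) (use assms in auto)

lemma infsum_single:
  fixes g :: "'i \<Rightarrow> 'b::{comm_monoid_add,t2_space}"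
  assumes "\<And>k. k \<noteq> a \<Longrightarrow> g k = 0"
  shows "infsum g UNIV = g a"
proof -
  have "infsum g UNIV = infsum g {a}"
    by (rule infsum_cong_neutral) (use assms in auto)
  then show ?thesis by simp
qed

lemma infsum_shift_Suc:
  fixes f :: "nat \<Rightarrow> 'c::banach"
  assumes "f summable_on UNIV"
  shows "infsum (\<lambda>m. f (Suc m)) UNIV = infsum f UNIV - f 0"
proof -
  have U: "(UNIV :: nat set) = insert 0 (range Suc)" by (auto intro: nat.exhaust)
  have s: "f summable_on range Suc" by (rule summable_on_subset_banach[OF assms]) auto
  have "infsum f UNIV = f 0 + infsum f (range Suc)"
    by (subst U) (rule infsum_insert[OF s], auto)
  moreover have "infsum f (range Suc) = infsum (\<lambda>m. f (Suc m)) UNIV"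
    using infsum_reindex[of Suc UNIV f] by (simp add: o_def)
  ultimately show ?thesis by simp
qed

lemma norm_infsum_tail_bound:
  fixes g :: "'i \<Rightarrow> 'c::banach"
  assumes "M summable_on UNIV" "\<And>k. norm (g k) \<le> M k" "finite A"
  shows "norm (infsum g UNIV - sum g A) \<le> infsum M UNIV - sum M A"
proof -
  have gs: "g summable_on UNIV" using summable_on_norm_bound assms by blast
  have "infsum g UNIV = infsum g A + infsum g (-A)"
    using infsum_Un_disjoint[of g A "-A"] summable_on_subset_banach[OF gs] by (simp add: Compl_partition)
  moreover have "infsum M UNIV = infsum M A + infsum M (-A)"
    using infsum_Un_disjoint[of M A "-A"] summable_on_subset[OF assms(1)] by (simp add: Compl_partition)
  moreover have "norm (infsum g (-A)) \<le> infsum M (-A)"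
    using norm_infsum_bound[of M "-A" g] summable_on_subset[OF assms(1)] assms(2) by blast
  ultimately show ?thesis using assms(3) by simp
qed

lemma eventually_infsum_tail_less:
  fixes M :: "'i \<Rightarrow> real"
  assumes "M summable_on UNIV" "e > 0"
  shows "\<forall>\<^sub>F A in finite_subsets_at_top UNIV. finite A \<and> infsum M UNIV - sum M A < e"
proof (rule eventually_conj)
  show "\<forall>\<^sub>F A in finite_subsets_at_top UNIV. finite A"
    by (rule eventually_finite_subsets_at_top_weakI) simp
  have "(sum M \<longlongrightarrow> infsum M UNIV) (finite_subsets_at_top UNIV)"
    using assms(1) has_sum_def has_sum_infsum by blast
  then have "\<forall>\<^sub>F A in finite_subsets_at_top UNIV. dist (sum M A) (infsum M UNIV) < e"
    using assms(2) tendsto_iff by blast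
  then show "\<forall>\<^sub>F A in finite_subsets_at_top UNIV. infsum M UNIV - sum M A < e"
    by eventually_elim (simp add: dist_real_def)
qed

lemma continuous_on_infsum_M_test:
  fixes g :: "'i \<Rightarrow> 'b::topological_space \<Rightarrow> 'c::banach"
  assumes "\<And>k. continuous_on S (g k)" "M summable_on UNIV"
    and "\<And>k y. y \<in> S \<Longrightarrow> norm (g k y) \<le> M k"
  shows "continuous_on S (\<lambda>y. infsum (\<lambda>k. g k y) UNIV)"
proof (rule uniform_limit_theorem)
  show "\<forall>\<^sub>F A in finite_subsets_at_top UNIV. continuous_on S (\<lambda>y. sum (\<lambda>k. g k y) A)"
    by (intro always_eventually allI continuous_on_sum) (use assms(1) in auto)
  show "\<not> trivial_limit (finite_subsets_at_top (UNIV::'i set))"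
    by (simp add: finite_subsets_at_top_neq_bot)
  show "uniform_limit S (\<lambda>A y. sum (\<lambda>k. g k y) A) (\<lambda>y. infsum (\<lambda>k. g k y) UNIV)
      (finite_subsets_at_top UNIV)"
    unfolding uniform_limit_iff
  proof (intro allI impI)
    fix e :: real assume "e > 0"
    have "\<forall>y\<in>S. dist (sum (\<lambda>k. g k y) A) (infsum (\<lambda>k. g k y) UNIV) < e"
      if A: "finite A \<and> infsum M UNIV - sum M A < e" for A
    proof
      fix y assume "y \<in> S"
      have "norm (infsum (\<lambda>k. g k y) UNIV - sum (\<lambda>k. g k y) A) \<le> infsum M UNIV - sum M A"
        using assms(3)[OF \<open>y \<in> S\<close>] A by (intro norm_infsum_tail_bound[OF assms(2)]) auto
      moreover have "dist (sum (\<lambda>k. g k y) A) (infsum (\<lambda>k. g k y) UNIV)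
          = norm (infsum (\<lambda>k. g k y) UNIV - sum (\<lambda>k. g k y) A)"
        by (simp only: dist_norm norm_minus_commute[of "sum (\<lambda>k. g k y) A"])
      ultimately show "dist (sum (\<lambda>k. g k y) A) (infsum (\<lambda>k. g k y) UNIV) < e"
        using A by linarith
    qed
    then show "\<forall>\<^sub>F A in finite_subsets_at_top UNIV.
        \<forall>y\<in>S. dist (sum (\<lambda>k. g k y) A) (infsum (\<lambda>k. g k y) UNIV) < e"
      by (rule eventually_mono[OF eventually_infsum_tail_less[OF assms(2) \<open>e > 0\<close>]])
  qed
qed

lemma summable_on_product_bound:
  fixes h :: "'i \<times> 'j \<Rightarrow> 'c::banach" and a :: "'i \<Rightarrow> real" and b :: "'j \<Rightarrow> real"
  assumes a: "a summable_on UNIV" and b: "b summable_on UNIV" and "\<And>k. 0 \<le> a k" "\<And>m. 0 \<le> b m"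
    and "\<And>k m. norm (h (k,m)) \<le> a k * b m"
  shows "h summable_on UNIV \<times> UNIV"
proof -
  have "(\<lambda>(k,m). a k * b m) summable_on Sigma UNIV (\<lambda>_. UNIV)"
  proof (rule summable_on_SigmaI[where g="\<lambda>k. a k * infsum b UNIV"])
    show "((\<lambda>m. case (k, m) of (k, m) \<Rightarrow> a k * b m) has_sum a k * infsum b UNIV) UNIV" for k
      using has_sum_cmult_right[OF has_sum_infsum[OF b], of "a k"] by simp
    show "(\<lambda>k. a k * infsum b UNIV) summable_on UNIV"
      by (rule summable_on_cmult_left[OF a])
    show "0 \<le> (case (k, m) of (k, m) \<Rightarrow> a k * b m)" for k m
      using assms(3,4) by simp
  qed
  then show ?thesis
    using summable_on_norm_bound[of "\<lambda>(k,m). a k * b m" "UNIV \<times> UNIV" h] assms(5) by auto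
qed

lemma Cauchy_product_int:
  fixes u v :: "int \<Rightarrow> 'c::{banach,real_normed_field}" and a b :: "int \<Rightarrow> real"
  assumes a: "a summable_on UNIV" and b: "b summable_on UNIV" and a0: "\<And>k. 0 \<le> a k"
    and b0: "\<And>m. 0 \<le> b m" and ua: "\<And>k. norm (u k) \<le> a k" and vb: "\<And>m. norm (v m) \<le> b m"
  shows "(\<lambda>n. infsum (\<lambda>k. u k * v (n-k)) UNIV) summable_on UNIV"
    and "infsum (\<lambda>n. infsum (\<lambda>k. u k * v (n-k)) UNIV) UNIV = infsum u UNIV * infsum v UNIV"
proof -
  define h where "h = (\<lambda>(k,m). u k * v m)"
  have bij: "bij_betw (\<lambda>(n::int,k::int). (k, n - k)) (UNIV \<times> UNIV) (UNIV \<times> UNIV)"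
    by (rule bij_betwI[where g="\<lambda>(k,m). (k+m, k)"]) auto
  have us: "u summable_on UNIV" using summable_on_norm_bound[OF a] ua by blast
  have vs: "v summable_on UNIV" using summable_on_norm_bound[OF b] vb by blast
  have hs: "h summable_on UNIV \<times> UNIV"
    by (rule summable_on_product_bound[OF a b a0 b0])
       (auto simp: h_def norm_mult intro: mult_mono ua vb a0 order_trans[OF norm_ge_zero ua])
  have Hs: "(\<lambda>(n,k). u k * v (n - k)) summable_on UNIV \<times> UNIV"
    using summable_on_reindex_bij_betw[OF bij, of h] hs by (simp add: h_def case_prod_unfold)
  then show "(\<lambda>n. infsum (\<lambda>k. u k * v (n-k)) UNIV) summable_on UNIV"
    using summable_on_Sigma_banach[of "\<lambda>n k. u k * v (n - k)" UNIV "\<lambda>_. UNIV"] by simp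
  have "infsum (\<lambda>n. infsum (\<lambda>k. u k * v (n-k)) UNIV) UNIV
      = infsum (\<lambda>(n,k). u k * v (n - k)) (UNIV \<times> UNIV)"
    using infsum_Sigma'_banach[of "\<lambda>n k. u k * v (n - k)" UNIV "\<lambda>_. UNIV"] Hs by simp
  also have "\<dots> = infsum h (UNIV \<times> UNIV)"
    using infsum_reindex_bij_betw[OF bij, of h] by (simp add: h_def case_prod_unfold)
  also have "\<dots> = infsum (\<lambda>k. infsum (\<lambda>m. u k * v m) UNIV) UNIV"
    using infsum_Sigma'_banach[of "\<lambda>k m. u k * v m" UNIV "\<lambda>_. UNIV"] hs by (simp add: h_def)
  also have "\<dots> = infsum u UNIV * infsum v UNIV"
    by (simp add: infsum_cmult_right infsum_cmult_left vs us)
  finally show "infsum (\<lambda>n. infsum (\<lambda>k. u k * v (n-k)) UNIV) UNIV = infsum u UNIV * infsum v UNIV" .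
qed

lemma cutoff_function:
  fixes f :: "'b::topological_space \<Rightarrow> 'c::real_normed_vector"
  assumes f: "continuous_on UNIV f" and e: "e > 0"
  obtains r :: "'b \<Rightarrow> real" where "continuous_on UNIV r" "\<And>y. 0 \<le> r y" "\<And>y. r y \<le> 1"
    "\<And>y. norm (f y) < e \<Longrightarrow> r y = 0" "\<And>y. norm (f y) * (1 - r y) \<le> 2 * e"
proof
  define r where "r = (\<lambda>y. min 1 (max 0 (norm (f y) / e - 1)))"
  show "continuous_on UNIV r" unfolding r_def by (intro continuous_intros f) (use e in auto)
  show r01: "0 \<le> r y" "r y \<le> 1" for y by (auto simp: r_def)
  show "norm (f y) < e \<Longrightarrow> r y = 0" for y using e by (auto simp: r_def min_def max_def field_simps)
  show "norm (f y) * (1 - r y) \<le> 2 * e" for y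
  proof (cases "2 * e \<le> norm (f y)")
    case True
    then have "r y = 1" unfolding r_def using e by (auto simp: min_def max_def field_simps)
    then show ?thesis using e by simp
  next
    case False
    have "norm (f y) * (1 - r y) \<le> norm (f y)" using r01[of y] by (simp add: mult_left_le)
    then show ?thesis using False by linarith
  qed
qed

lemma sphere_nth_root:
  fixes c :: complex
  assumes "cmod c = 1" "0 < n"
  obtains z where "z ^ n = c" "z \<in> sphere 0 1"
proof -
  define z where "z = exp (ln c / of_nat n)"
  have c0: "c \<noteq> 0" using assms by auto
  have e: "of_nat n * (ln c / of_nat n) = ln c" using assms(2) by simp
  have "z ^ n = exp (of_nat n * (ln c / of_nat n))" unfolding z_def by (rule exp_of_nat_mult[symmetric])
  then have zn: "z ^ n = c" unfolding e using c0 by simp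
  then have "cmod z ^ n = 1 ^ n" using assms by (simp add: norm_power[symmetric])
  then have "cmod z = 1" by (rule power_eq_imp_eq_base) (use assms in auto)
  then show ?thesis using zn that by auto
qed

section \<open>Integer iterates of a bijection\<close>

lemma ipow_0 [simp]: "ipow \<sigma> 0 = id"
  by (simp add: ipow_def)

lemma Fix_0 [simp]: "Fix \<sigma> 0 = UNIV"
  by (simp add: Fix_def)

locale bijective_map =
  fixes \<sigma> :: "'a::topological_space \<Rightarrow> 'a"
  assumes bij: "bij \<sigma>"
begin

lemma inv_apply [simp]: "inv \<sigma> (\<sigma> y) = y"
  using bij by (simp add: bij_is_inj)

lemma apply_inv [simp]: "\<sigma> (inv \<sigma> y) = y"
  using bij by (simp add: bij_is_surj surj_f_inv_f)

lemma ipow_Suc_right: "ipow \<sigma> (a + 1) = ipow \<sigma> a \<circ> \<sigma>"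
proof (cases "0 \<le> a")
  case True
  then have "nat (a + 1) = Suc (nat a)" by simp
  then show ?thesis using True by (simp add: ipow_def funpow_Suc_right del: funpow.simps)
next
  case False
  show ?thesis
  proof (cases "a = -1")
    case True then show ?thesis by (auto simp: ipow_def fun_eq_iff)
  next
    case False': False
    then have "nat (-a) = Suc (nat (-(a + 1)))" using False by simp
    then show ?thesis using False False'
      by (auto simp: ipow_def fun_eq_iff funpow_Suc_right simp del: funpow.simps)
  qed
qed

lemma ipow_add: "ipow \<sigma> (a + b) = ipow \<sigma> a \<circ> ipow \<sigma> b"
proof (induction b rule: int_induct[where k=0])
  case base then show ?case by simp
next
  case (step1 i)
  have "ipow \<sigma> (a + (i + 1)) = ipow \<sigma> ((a + i) + 1)" by (simp add: add.assoc)
  then show ?case using step1 by (simp add: ipow_Suc_right fun_eq_iff)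
next
  case (step2 i)
  have pred: "ipow \<sigma> (b - 1) = ipow \<sigma> b \<circ> inv \<sigma>" for b
  proof -
    have "ipow \<sigma> b = ipow \<sigma> (b - 1) \<circ> \<sigma>" using ipow_Suc_right[of "b - 1"] by simp
    then show ?thesis by (auto simp: fun_eq_iff)
  qed
  have "ipow \<sigma> (a + (i - 1)) = ipow \<sigma> ((a + i) - 1)" by (simp add: algebra_simps)
  then show ?case using step2 by (simp add: pred fun_eq_iff)
qed

lemma ipow_neg_cancel [simp]: "ipow \<sigma> (-a) (ipow \<sigma> a y) = y"
  using ipow_add[of "-a" a] by (simp add: fun_eq_iff)

lemma ipow_cancel_neg [simp]: "ipow \<sigma> a (ipow \<sigma> (-a) y) = y"
  using ipow_add[of a "-a"] by (simp add: fun_eq_iff)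

lemma ipow_neg_fixed_iff: "ipow \<sigma> (-a) y = y \<longleftrightarrow> ipow \<sigma> a y = y"
  by (metis ipow_neg_cancel ipow_cancel_neg)

lemma Fix_uminus: "Fix \<sigma> (-a) = Fix \<sigma> a"
  by (auto simp: Fix_def ipow_neg_fixed_iff)

lemma Fix_add: "y \<in> Fix \<sigma> a \<Longrightarrow> y \<in> Fix \<sigma> b \<Longrightarrow> y \<in> Fix \<sigma> (a + b)"
  by (simp add: Fix_def ipow_add)

lemma Fix_mult: "y \<in> Fix \<sigma> a \<Longrightarrow> y \<in> Fix \<sigma> (a * m)"
proof (induction m rule: int_induct[where k=0])
  case base then show ?case by (simp add: Fix_def)
next
  case (step1 i) then show ?case using Fix_add[of y "a * i" a] by (simp add: algebra_simps)
next
  case (step2 i)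
  then show ?case using Fix_add[of y "a * i" "-a"] Fix_uminus[of a] by (simp add: algebra_simps)
qed

lemma interior_Fix_mult: "y \<in> interior (Fix \<sigma> a) \<Longrightarrow> y \<in> interior (Fix \<sigma> (a * m))"
  using interior_mono[of "Fix \<sigma> a" "Fix \<sigma> (a * m)"] Fix_mult by blast

lemma interior_Fix_gcd:
  assumes "y \<in> interior (Fix \<sigma> a)" "y \<in> interior (Fix \<sigma> b)"
  shows "y \<in> interior (Fix \<sigma> (gcd a b))"
proof -
  have "y \<in> Fix \<sigma> (gcd a b)" if "y \<in> Fix \<sigma> a" "y \<in> Fix \<sigma> b" for y
  proof -
    obtain u v where "gcd a b = a * u + b * v" using bezout_int by (metis mult.commute)
    then show ?thesis using Fix_add Fix_mult that by metis
  qed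
  then have "interior (Fix \<sigma> a) \<inter> interior (Fix \<sigma> b) \<subseteq> interior (Fix \<sigma> (gcd a b))"
    by (intro interior_maximal) (auto dest: interior_subset[THEN subsetD])
  then show ?thesis using assms by blast
qed

lemma Per_iff: "x \<in> Per \<sigma> \<longleftrightarrow> (\<exists>q::nat. 1 \<le> q \<and> x \<in> interior (Fix \<sigma> (int q)))"
  by (auto simp: Per_def)

lemma nmin_ge_1: "x \<in> Per \<sigma> \<Longrightarrow> 1 \<le> nmin \<sigma> x"
  and interior_Fix_nmin: "x \<in> Per \<sigma> \<Longrightarrow> x \<in> interior (Fix \<sigma> (int (nmin \<sigma> x)))"
  using LeastI_ex[of "\<lambda>n. 1 \<le> n \<and> x \<in> interior (Fix \<sigma> (int n))"] by (auto simp: Per_iff nmin_def)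

lemma nmin_le: "1 \<le> m \<Longrightarrow> x \<in> interior (Fix \<sigma> (int m)) \<Longrightarrow> nmin \<sigma> x \<le> m"
  unfolding nmin_def by (rule Least_le) simp

lemma nmin_dvd:
  assumes x: "x \<in> Per \<sigma>" and k: "x \<in> interior (Fix \<sigma> k)"
  shows "int (nmin \<sigma> x) dvd k"
proof -
  define n where "n = nmin \<sigma> x"
  define d where "d = gcd k (int n)"
  have n1: "1 \<le> n" and "x \<in> interior (Fix \<sigma> (int n))"
    using nmin_ge_1[OF x] interior_Fix_nmin[OF x] by (simp_all add: n_def)
  then have xd: "x \<in> interior (Fix \<sigma> d)" unfolding d_def using interior_Fix_gcd[OF k] by blast
  have "0 < d" using n1 by (simp add: d_def)
  then have d1: "d \<ge> 1" by simp
  have "n \<le> nat d" using nmin_le[of "nat d" x] d1 xd by (simp add: n_def)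
  moreover have "d \<le> int n" using n1 unfolding d_def by (intro zdvd_imp_le) auto
  ultimately have "d = int n" using d1 by linarith
  then show ?thesis by (metis d_def gcd_dvd1 n_def)
qed

lemma interior_Fix_not_Per:
  assumes "x \<notin> Per \<sigma>" "k \<noteq> 0"
  shows "x \<notin> interior (Fix \<sigma> k)"
proof
  assume "x \<in> interior (Fix \<sigma> k)"
  then have "x \<in> interior (Fix \<sigma> (int (nat \<bar>k\<bar>)))"
    using Fix_uminus[of k] by (cases "k > 0") simp_all
  moreover have "1 \<le> nat \<bar>k\<bar>" using assms(2) by simp
  ultimately show False using assms(1) Per_iff[of x] by blast
qed

end

locale compact_bijective_map = bijective_map \<sigma> for \<sigma> :: "'a::t2_space \<Rightarrow> 'a" +
  assumes compact_UNIV: "compact (UNIV :: 'a set)"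
begin

lemma normal_space: "normal_space (euclidean :: 'a topology)"
proof -
  have "Hausdorff_space (euclidean :: 'a topology)"
    unfolding Hausdorff_space_def disjnt_def by (metis hausdorff open_openin)
  then show ?thesis
    by (intro compact_Hausdorff_or_regular_imp_normal_space)
       (use compact_UNIV in \<open>auto simp: compact_space_def\<close>)
qed

lemma Urysohn_function:
  assumes "closed S" "closed T" "S \<inter> T = {}"
  obtains f :: "'a \<Rightarrow> real" where "continuous_on UNIV f" "\<And>y. f y \<in> {0..1}"
    "\<And>y. y \<in> S \<Longrightarrow> f y = 1" "\<And>y. y \<in> T \<Longrightarrow> f y = 0"
proof -
  obtain f where "continuous_map euclidean (top_of_set {0..1::real}) f" "f ` T \<subseteq> {0}" "f ` S \<subseteq> {1}"
    using Urysohn_lemma[OF normal_space, of T S 0 1] assms by (auto simp: disjnt_def)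
  then show ?thesis using that[of f] by (fastforce simp: continuous_map_in_subtopology)
qed

lemma separating_function:
  assumes "y \<noteq> w"
  obtains f :: "'a \<Rightarrow> complex" where "continuous_on UNIV f" "f y = 1" "f w = 0"
proof -
  obtain f :: "'a \<Rightarrow> real" where "continuous_on UNIV f" "f y = 1" "f w = 0"
    using Urysohn_function[of "{y}" "{w}"] assms by auto
  moreover have "continuous_on UNIV (\<lambda>v. complex_of_real (f v))"
    by (intro continuous_intros calculation)
  ultimately show ?thesis using that[of "\<lambda>v. complex_of_real (f v)"] by auto
qed

lemma norm_le_supn: "continuous_on UNIV (f :: 'a \<Rightarrow> complex) \<Longrightarrow> cmod (f y) \<le> supn f"
proof -
  assume "continuous_on UNIV f"
  then have "bounded (range f)" by (intro compact_imp_bounded compact_continuous_image compact_UNIV)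
  then obtain B where "\<forall>v\<in>range f. norm v \<le> B" unfolding bounded_iff by blast
  then have "bdd_above (range (\<lambda>x. cmod (f x)))" by (intro bdd_aboveI2[where M=B]) auto
  then show ?thesis unfolding supn_def by (rule cSUP_upper[OF UNIV_I])
qed

lemma supn_nonneg: "continuous_on UNIV (f :: 'a \<Rightarrow> complex) \<Longrightarrow> 0 \<le> supn f"
  by (rule order_trans[OF norm_ge_zero norm_le_supn])

end

lemma supn_le: "(\<And>y. cmod (f y) \<le> B) \<Longrightarrow> supn f \<le> B"
  unfolding supn_def by (rule cSUP_least) auto

lemma supn_zero [simp]: "supn (\<lambda>_. 0) = 0"
  by (simp add: supn_def)

section \<open>The commutant as an algebra of Fix-supported series\<close>

definition monomial :: "('a \<Rightarrow> complex) \<Rightarrow> int \<Rightarrow> int \<Rightarrow> 'a \<Rightarrow> complex" where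
  "monomial f k = (\<lambda>j. if j = k then f else (\<lambda>_. 0))"

definition restrict_index :: "int set \<Rightarrow> (int \<Rightarrow> 'a \<Rightarrow> complex) \<Rightarrow> int \<Rightarrow> 'a \<Rightarrow> complex" where
  "restrict_index A F = (\<lambda>k. if k \<in> A then F k else (\<lambda>_. 0))"

definition l1_one :: "int \<Rightarrow> 'a \<Rightarrow> complex" where
  "l1_one = emb (\<lambda>_. 1)"

definition l1norm :: "(int \<Rightarrow> 'a \<Rightarrow> complex) \<Rightarrow> real" where
  "l1norm F = infsum (\<lambda>k. supn (F k)) UNIV"

definition fix_supported :: "('a \<Rightarrow> 'a) \<Rightarrow> (int \<Rightarrow> 'a \<Rightarrow> complex) \<Rightarrow> bool" where
  "fix_supported \<sigma> F \<longleftrightarrow> (\<forall>k y. F k y \<noteq> 0 \<longrightarrow> y \<in> Fix \<sigma> k)"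

lemma emb_eq_monomial: "emb f = monomial f 0"
  by (simp add: emb_def monomial_def fun_eq_iff)

lemma monomial_add: "monomial (\<lambda>y. f y + g y) k = (\<lambda>j y. monomial f k j y + monomial g k j y)"
  by (auto simp: monomial_def fun_eq_iff)

lemma restrict_index_split: "F = (\<lambda>k x. restrict_index A F k x + restrict_index (-A) F k x)"
  by (auto simp: restrict_index_def fun_eq_iff)

lemma restrict_index_insert:
  "a \<notin> A \<Longrightarrow> restrict_index (insert a A) F = (\<lambda>k x. monomial (F a) a k x + restrict_index A F k x)"
  by (auto simp: restrict_index_def monomial_def fun_eq_iff)

lemma l1mult_emb_left: "l1mult \<sigma> (emb f) F = (\<lambda>n x. f x * F n x)"
  unfolding l1mult_def by (intro ext, subst infsum_single[where a=0]) (auto simp: emb_def)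

lemma l1mult_emb_right: "l1mult \<sigma> F (emb f) = (\<lambda>n x. F n x * f (ipow \<sigma> (-n) x))"
proof (intro ext)
  fix n x
  show "l1mult \<sigma> F (emb f) n x = F n x * f (ipow \<sigma> (-n) x)"
    unfolding l1mult_def by (subst infsum_single[where a=n]) (auto simp: emb_def)
qed

lemma l1_continuous: "F \<in> l1 \<Longrightarrow> continuous_on UNIV (F k)"
  by (simp add: l1_def)

lemma l1_summable: "F \<in> l1 \<Longrightarrow> (\<lambda>k. supn (F k)) summable_on UNIV"
  by (simp add: l1_def)

lemma l1norm_le_infsum:
  assumes "M summable_on UNIV" "\<And>k. supn (F k) \<le> M k" "F \<in> l1"
  shows "l1norm F \<le> infsum M UNIV"
  unfolding l1norm_def by (rule infsum_mono[OF l1_summable[OF assms(3)] assms(1,2)])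

lemma l1norm_monomial: "l1norm (monomial f k) = supn f"
  unfolding l1norm_def by (subst infsum_single[where a=k]) (auto simp: monomial_def)

context compact_bijective_map
begin

lemma norm_le_supn_l1: "(F :: int \<Rightarrow> 'a \<Rightarrow> complex) \<in> l1 \<Longrightarrow> cmod (F k y) \<le> supn (F k)"
  by (rule norm_le_supn[OF l1_continuous])

lemma supn_nonneg_l1: "(F :: int \<Rightarrow> 'a \<Rightarrow> complex) \<in> l1 \<Longrightarrow> 0 \<le> supn (F k)"
  by (rule supn_nonneg[OF l1_continuous])

lemma l1norm_nonneg: "(F :: int \<Rightarrow> 'a \<Rightarrow> complex) \<in> l1 \<Longrightarrow> 0 \<le> l1norm F"
  unfolding l1norm_def by (rule infsum_nonneg) (use supn_nonneg_l1 in auto)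

lemma supn_le_l1norm: "(F :: int \<Rightarrow> 'a \<Rightarrow> complex) \<in> l1 \<Longrightarrow> supn (F j) \<le> l1norm F"
proof -
  assume F: "F \<in> l1"
  have "infsum (\<lambda>k. supn (F k)) {j} \<le> infsum (\<lambda>k. supn (F k)) UNIV"
    by (rule infsum_mono_neutral) (use F l1_summable supn_nonneg_l1 in auto)
  then show ?thesis by (simp add: l1norm_def)
qed

lemma norm_le_l1norm: "(F :: int \<Rightarrow> 'a \<Rightarrow> complex) \<in> l1 \<Longrightarrow> cmod (F k y) \<le> l1norm F"
  using norm_le_supn_l1 supn_le_l1norm by (rule order_trans)

lemma l1I:
  assumes "\<And>k. continuous_on UNIV (F k :: 'a \<Rightarrow> complex)" "M summable_on UNIV" "\<And>k. supn (F k) \<le> M k"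
  shows "F \<in> l1"
proof -
  have "(\<lambda>k. supn (F k)) summable_on UNIV"
    by (rule summable_on_comparison_test[OF assms(2)]) (use assms supn_nonneg in auto)
  then show ?thesis using assms(1) by (simp add: l1_def)
qed

lemma monomial_l1: "continuous_on UNIV (f :: 'a \<Rightarrow> complex) \<Longrightarrow> monomial f k \<in> l1"
proof (rule l1I[where M="\<lambda>j. if j = k then supn f else 0"])
  show "(\<lambda>j. if j = k then supn f else 0) summable_on UNIV"
    by (rule finite_nonzero_values_imp_summable_on) auto
qed (auto simp: monomial_def)

lemma fix_supported_shift: "fix_supported \<sigma> F \<Longrightarrow> F k y \<noteq> 0 \<Longrightarrow> ipow \<sigma> (-k) y = y"
  unfolding fix_supported_def Fix_def using ipow_neg_fixed_iff by blast

text \<open>Commuting with f delta^0 forces f (sigma^-k y) = f y on the support of F k, and continuous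
  functions separate points.\<close>

lemma Comm_iff: "F \<in> Comm \<sigma> \<longleftrightarrow> F \<in> l1 \<and> fix_supported \<sigma> F"
proof
  assume F: "F \<in> Comm \<sigma>"
  have "ipow \<sigma> k y = y" if "F k y \<noteq> 0" for k y
  proof (rule ccontr)
    assume "ipow \<sigma> k y \<noteq> y"
    then have "y \<noteq> ipow \<sigma> (-k) y" using ipow_neg_fixed_iff by metis
    then obtain f :: "'a \<Rightarrow> complex" where f: "continuous_on UNIV f" "f y = 1" "f (ipow \<sigma> (-k) y) = 0"
      by (rule separating_function)
    have "l1mult \<sigma> (emb f) F = l1mult \<sigma> F (emb f)" using F f(1) by (simp add: Comm_def)
    then have "f y * F k y = F k y * f (ipow \<sigma> (-k) y)"
      unfolding l1mult_emb_left l1mult_emb_right by metis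
    then show False using f that by simp
  qed
  then show "F \<in> l1 \<and> fix_supported \<sigma> F" using F by (auto simp: Comm_def fix_supported_def Fix_def)
next
  assume F: "F \<in> l1 \<and> fix_supported \<sigma> F"
  have "l1mult \<sigma> (emb f) F = l1mult \<sigma> F (emb f)" for f :: "'a \<Rightarrow> complex"
    unfolding l1mult_emb_left l1mult_emb_right
  proof (intro ext)
    fix n x
    show "f x * F n x = F n x * f (ipow \<sigma> (- n) x)"
    proof (cases "F n x = 0")
      case False
      then show ?thesis using fix_supported_shift[of F n x] F by simp
    qed simp
  qed
  then show "F \<in> Comm \<sigma>" using F by (simp add: Comm_def)
qed

lemma Comm_l1: "F \<in> Comm \<sigma> \<Longrightarrow> F \<in> l1"
  and Comm_fix_supported: "F \<in> Comm \<sigma> \<Longrightarrow> fix_supported \<sigma> F"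
  by (simp_all add: Comm_iff)

lemma Comm_continuous: "F \<in> Comm \<sigma> \<Longrightarrow> continuous_on UNIV (F k)"
  by (rule l1_continuous[OF Comm_l1])

lemma monomial_Comm:
  assumes "continuous_on UNIV f" "\<And>y. f y \<noteq> 0 \<Longrightarrow> y \<in> Fix \<sigma> k"
  shows "monomial f k \<in> Comm \<sigma>"
  unfolding Comm_iff using monomial_l1[OF assms(1)] assms(2) by (auto simp: fix_supported_def monomial_def)

lemma monomial_Comm_interior:
  assumes "continuous_on UNIV f" "\<And>y. f y \<noteq> 0 \<Longrightarrow> y \<in> interior (Fix \<sigma> k)"
  shows "monomial f k \<in> Comm \<sigma>"
  using monomial_Comm[OF assms(1)] assms(2) interior_subset by blast

lemma monomial_Comm_D:
  assumes "monomial f k \<in> Comm \<sigma>"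
  shows "continuous_on UNIV f" "f y \<noteq> 0 \<Longrightarrow> y \<in> Fix \<sigma> k"
proof -
  show "continuous_on UNIV f" using Comm_continuous[OF assms, of k] by (simp add: monomial_def)
  show "f y \<noteq> 0 \<Longrightarrow> y \<in> Fix \<sigma> k"
    using Comm_fix_supported[OF assms] unfolding fix_supported_def monomial_def by metis
qed

lemma monomial_coeff_Comm: "F \<in> Comm \<sigma> \<Longrightarrow> monomial (F k) k \<in> Comm \<sigma>"
  by (rule monomial_Comm[OF Comm_continuous]) (use Comm_fix_supported in \<open>auto simp: fix_supported_def\<close>)

lemma emb_Comm: "continuous_on UNIV f \<Longrightarrow> emb f \<in> Comm \<sigma>"
  unfolding emb_eq_monomial by (rule monomial_Comm) (auto simp: Fix_def)

lemma l1_one_Comm: "l1_one \<in> Comm \<sigma>"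
  unfolding l1_one_def by (rule emb_Comm) simp

lemma l1norm_l1_one: "l1norm l1_one \<le> 1"
  unfolding l1_one_def emb_eq_monomial l1norm_monomial by (rule supn_le) simp

text \<open>The set where F k is nonzero is open and contained in Fix k.\<close>

lemma Comm_coeff_vanishes:
  assumes F: "F \<in> Comm \<sigma>" and x: "x \<notin> interior (Fix \<sigma> k)"
  shows "F k x = 0"
proof -
  have "open {y. F k y \<noteq> 0}" using open_Collect_neq[OF Comm_continuous[OF F]] by simp
  moreover have "{y. F k y \<noteq> 0} \<subseteq> Fix \<sigma> k" using Comm_fix_supported[OF F] by (auto simp: fix_supported_def)
  ultimately have "{y. F k y \<noteq> 0} \<subseteq> interior (Fix \<sigma> k)" by (simp add: interior_maximal)
  then show ?thesis using x by blast
qed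

lemma l1mult_fix_supported:
  assumes "fix_supported \<sigma> F"
  shows "l1mult \<sigma> F G = (\<lambda>n y. infsum (\<lambda>k. F k y * G (n-k) y) UNIV)"
proof (intro ext)
  fix n y
  have "F k y * G (n - k) (ipow \<sigma> (-k) y) = F k y * G (n - k) y" for k
  proof (cases "F k y = 0")
    case False
    then show ?thesis using fix_supported_shift[OF assms, of k y] by simp
  qed simp
  then show "l1mult \<sigma> F G n y = infsum (\<lambda>k. F k y * G (n-k) y) UNIV"
    unfolding l1mult_def by (intro infsum_cong)
qed

lemma fix_supported_l1mult:
  assumes "fix_supported \<sigma> F" "fix_supported \<sigma> G"
  shows "fix_supported \<sigma> (l1mult \<sigma> F G)"
  unfolding fix_supported_def
proof (intro allI impI)
  fix n y assume "l1mult \<sigma> F G n y \<noteq> 0"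
  then obtain k where "F k y * G (n - k) y \<noteq> 0"
    unfolding l1mult_fix_supported[OF assms(1)] by (metis (mono_tags, lifting) infsum_0)
  then have "y \<in> Fix \<sigma> (k + (n - k))"
    using assms by (intro Fix_add) (auto simp: fix_supported_def)
  then show "y \<in> Fix \<sigma> n" by simp
qed

lemma Comm_l1mult:
  assumes F: "F \<in> Comm \<sigma>" and G: "G \<in> Comm \<sigma>"
  shows "l1mult \<sigma> F G \<in> Comm \<sigma>" "l1norm (l1mult \<sigma> F G) \<le> l1norm F * l1norm G"
proof -
  have Fl: "F \<in> l1" and Gl: "G \<in> l1" using F G by (simp_all add: Comm_l1)
  define a where "a = (\<lambda>k. supn (F k))"
  define b where "b = (\<lambda>k. supn (G k))"
  have a: "a summable_on UNIV" and b: "b summable_on UNIV"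
    using l1_summable Fl Gl by (auto simp: a_def b_def)
  have a0: "0 \<le> a k" and b0: "0 \<le> b k" for k
    using supn_nonneg_l1 Fl Gl by (auto simp: a_def b_def)
  define P where "P = l1mult \<sigma> F G"
  have P: "P n y = infsum (\<lambda>k. F k y * G (n-k) y) UNIV" for n y
    unfolding P_def l1mult_fix_supported[OF Comm_fix_supported[OF F]] by simp
  have terms: "cmod (F k y * G (n-k) y) \<le> a k * b (n-k)" for k n y
    unfolding a_def b_def norm_mult
    by (intro mult_mono norm_le_supn_l1 Fl Gl supn_nonneg_l1 norm_ge_zero)
  have M: "(\<lambda>k. a k * b (n-k)) summable_on UNIV" for n
    by (rule summable_on_comparison_test[OF summable_on_cmult_left[OF a, of "l1norm G"]])
       (use a0 b0 supn_le_l1norm[OF Gl] in \<open>auto intro: mult_left_mono simp: b_def\<close>)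
  define c where "c = (\<lambda>n. infsum (\<lambda>k. a k * b (n-k)) UNIV)"
  have c: "c summable_on UNIV" and "infsum c UNIV = infsum a UNIV * infsum b UNIV"
    using Cauchy_product_int[OF a b a0 b0, of a b] a0 b0 by (auto simp: c_def)
  then have c_sum: "infsum c UNIV = l1norm F * l1norm G" by (simp add: l1norm_def a_def b_def)
  have cont: "continuous_on UNIV (P n)" for n
    unfolding P[abs_def]
    by (rule continuous_on_infsum_M_test[OF _ M terms]) (intro continuous_intros l1_continuous Fl Gl)
  have supn: "supn (P n) \<le> c n" for n
    unfolding c_def by (rule supn_le) (simp add: P norm_infsum_bound[OF M terms])
  have "P \<in> l1" by (rule l1I[OF cont c supn])
  then show "l1mult \<sigma> F G \<in> Comm \<sigma>"
    using fix_supported_l1mult Comm_fix_supported F G by (simp add: Comm_iff P_def)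
  show "l1norm (l1mult \<sigma> F G) \<le> l1norm F * l1norm G"
    using l1norm_le_infsum[OF c supn \<open>P \<in> l1\<close>] c_sum by (simp add: P_def)
qed

lemma l1mult_one_left: "l1mult \<sigma> l1_one F = F"
  unfolding l1_one_def l1mult_emb_left by simp

lemma l1mult_monomial:
  assumes "monomial f a \<in> Comm \<sigma>"
  shows "l1mult \<sigma> (monomial f a) (monomial g b) = monomial (\<lambda>y. f y * g y) (a + b)"
  unfolding l1mult_fix_supported[OF Comm_fix_supported[OF assms]]
  by (intro ext, subst infsum_single[where a=a]) (auto simp: monomial_def)

lemma Comm_add:
  assumes F: "F \<in> Comm \<sigma>" and G: "G \<in> Comm \<sigma>"
  shows "(\<lambda>k x. F k x + G k x) \<in> Comm \<sigma>"
proof -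
  have Fl: "F \<in> l1" and Gl: "G \<in> l1" using F G by (simp_all add: Comm_l1)
  have "(\<lambda>k x. F k x + G k x) \<in> l1"
  proof (rule l1I[where M="\<lambda>k. supn (F k) + supn (G k)"])
    show "continuous_on UNIV (\<lambda>x. F k x + G k x)" for k
      by (intro continuous_intros l1_continuous Fl Gl)
    show "(\<lambda>k. supn (F k) + supn (G k)) summable_on UNIV"
      by (intro summable_on_add l1_summable Fl Gl)
    show "supn (\<lambda>x. F k x + G k x) \<le> supn (F k) + supn (G k)" for k
      by (rule supn_le) (metis norm_triangle_ineq add_mono order_trans norm_le_supn_l1 Fl Gl)
  qed
  moreover have "fix_supported \<sigma> (\<lambda>k x. F k x + G k x)"
    using Comm_fix_supported[OF F] Comm_fix_supported[OF G]
    unfolding fix_supported_def by (metis add.right_neutral)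
  ultimately show ?thesis by (simp add: Comm_iff)
qed

lemma Comm_cmult:
  assumes F: "F \<in> Comm \<sigma>"
  shows "(\<lambda>k x. c * F k x) \<in> Comm \<sigma>" "l1norm (\<lambda>k x. c * F k x) \<le> cmod c * l1norm F"
proof -
  have Fl: "F \<in> l1" using F by (simp add: Comm_l1)
  have supn: "supn (\<lambda>x. c * F k x) \<le> cmod c * supn (F k)" for k
    by (rule supn_le) (simp add: norm_mult mult_left_mono norm_le_supn_l1 Fl)
  have M: "(\<lambda>k. cmod c * supn (F k)) summable_on UNIV"
    by (intro summable_on_cmult_right l1_summable Fl)
  have l: "(\<lambda>k x. c * F k x) \<in> l1"
    by (rule l1I[OF _ M supn]) (intro continuous_intros l1_continuous Fl)
  moreover have "fix_supported \<sigma> (\<lambda>k x. c * F k x)"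
    using Comm_fix_supported[OF F] unfolding fix_supported_def by simp
  ultimately show "(\<lambda>k x. c * F k x) \<in> Comm \<sigma>" by (simp add: Comm_iff)
  have "infsum (\<lambda>k. cmod c * supn (F k)) UNIV = cmod c * l1norm F"
    unfolding l1norm_def by (rule infsum_cmult_right) (simp add: l1_summable Fl)
  then show "l1norm (\<lambda>k x. c * F k x) \<le> cmod c * l1norm F"
    using l1norm_le_infsum[OF M supn l] by simp
qed

lemma restrict_index_Comm: "F \<in> Comm \<sigma> \<Longrightarrow> restrict_index A F \<in> Comm \<sigma>"
  unfolding Comm_iff
  by (auto intro!: l1I[where M="\<lambda>k. supn (F k)"]
        simp: restrict_index_def l1_continuous l1_summable supn_nonneg fix_supported_def)

lemma l1norm_restrict_index_Compl:
  assumes F: "F \<in> Comm \<sigma>" and "finite A"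
  shows "l1norm (restrict_index (-A) F) = l1norm F - sum (\<lambda>k. supn (F k)) A"
proof -
  have "l1norm (restrict_index (-A) F) = infsum (\<lambda>k. supn (F k)) (-A)"
    unfolding l1norm_def by (rule infsum_cong_neutral) (auto simp: restrict_index_def)
  moreover have "l1norm F = infsum (\<lambda>k. supn (F k)) A + infsum (\<lambda>k. supn (F k)) (-A)"
    unfolding l1norm_def
    using infsum_Un_disjoint[of "\<lambda>k. supn (F k)" A "-A"] summable_on_subset[OF l1_summable[OF Comm_l1[OF F]]]
    by (simp add: Compl_partition)
  ultimately show ?thesis using \<open>finite A\<close> by simp
qed

lemma Comm_infsum:
  fixes P :: "'i \<Rightarrow> int \<Rightarrow> 'a \<Rightarrow> complex"
  assumes P: "\<And>m. P m \<in> Comm \<sigma>" and b: "b summable_on UNIV" and Pb: "\<And>m. l1norm (P m) \<le> b m"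
  shows "(\<lambda>k y. infsum (\<lambda>m. P m k y) UNIV) \<in> Comm \<sigma>"
proof -
  define S where "S = (\<lambda>k y. infsum (\<lambda>m. P m k y) UNIV)"
  have Pl: "P m \<in> l1" for m using P by (rule Comm_l1)
  have supn_b: "supn (P m k) \<le> b m" for m k
    using supn_le_l1norm[OF Pl] Pb by (rule order_trans)
  have cont: "continuous_on UNIV (S k)" for k
    unfolding S_def
    by (rule continuous_on_infsum_M_test[OF _ b])
       (use l1_continuous[OF Pl] order_trans[OF norm_le_supn_l1[OF Pl] supn_b] in auto)
  define s where "s = (\<lambda>(m,k). supn (P m k))"
  have "s summable_on Sigma UNIV (\<lambda>_. UNIV)"
  proof (rule summable_on_SigmaI[where g="\<lambda>m. l1norm (P m)"])
    show "((\<lambda>k. s (m, k)) has_sum l1norm (P m)) UNIV" for m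
      unfolding s_def l1norm_def using l1_summable[OF Pl] by (simp add: has_sum_infsum)
    show "(\<lambda>m. l1norm (P m)) summable_on UNIV"
      by (rule summable_on_comparison_test[OF b]) (use Pb l1norm_nonneg Pl in auto)
  qed (simp add: s_def supn_nonneg_l1 Pl)
  then have "(\<lambda>(k,m). s (m,k)) summable_on UNIV \<times> UNIV"
    using summable_on_swap[of s UNIV UNIV] by simp
  then have row_sums: "(\<lambda>k. infsum (\<lambda>m. s (m,k)) UNIV) summable_on UNIV"
    using summable_on_Sigma_banach[of "\<lambda>k m. s (m,k)" UNIV "\<lambda>_. UNIV"] by simp
  have row: "(\<lambda>m. s (m,k)) summable_on UNIV" for k
    by (rule summable_on_comparison_test[OF b]) (auto simp: s_def supn_b supn_nonneg_l1 Pl)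
  have supn: "supn (S k) \<le> infsum (\<lambda>m. s (m,k)) UNIV" for k
    unfolding S_def by (rule supn_le, rule norm_infsum_bound[OF row]) (simp add: s_def norm_le_supn_l1 Pl)
  have "S \<in> l1" by (rule l1I[OF cont row_sums supn])
  moreover have "fix_supported \<sigma> S"
    unfolding fix_supported_def
  proof (intro allI impI)
    fix k y assume "S k y \<noteq> 0"
    then obtain m where "P m k y \<noteq> 0" unfolding S_def by (metis (mono_tags, lifting) infsum_0)
    then show "y \<in> Fix \<sigma> k" using Comm_fix_supported[OF P] by (auto simp: fix_supported_def)
  qed
  ultimately show ?thesis by (simp add: Comm_iff S_def)
qed

lemma l1mult_infsum_right:
  fixes P :: "'i \<Rightarrow> int \<Rightarrow> 'a \<Rightarrow> complex"
  assumes K: "K \<in> Comm \<sigma>" and P: "\<And>m. P m \<in> Comm \<sigma>"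
    and b: "b summable_on UNIV" "\<And>m. 0 \<le> b m" and Pb: "\<And>m. l1norm (P m) \<le> b m"
  shows "l1mult \<sigma> K (\<lambda>k y. infsum (\<lambda>m. P m k y) UNIV) n y = infsum (\<lambda>m. l1mult \<sigma> K (P m) n y) UNIV"
proof -
  have Kl: "K \<in> l1" using K by (rule Comm_l1)
  have bound: "cmod (P m k y) \<le> b m" for m k
    using norm_le_l1norm[OF Comm_l1[OF P]] Pb by (rule order_trans)
  have "(\<lambda>p. K (fst p) y * P (snd p) (n - fst p) y) summable_on UNIV \<times> UNIV"
    by (rule summable_on_product_bound[OF l1_summable[OF Kl] b(1) supn_nonneg_l1[OF Kl] b(2)])
       (simp add: norm_mult mult_mono[OF norm_le_supn_l1[OF Kl] bound supn_nonneg_l1[OF Kl]])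
  then have swap: "(\<lambda>(k, m). K k y * P m (n - k) y) summable_on UNIV \<times> UNIV"
    by (simp add: case_prod_unfold)
  have "l1mult \<sigma> K (\<lambda>k y. infsum (\<lambda>m. P m k y) UNIV) n y
      = infsum (\<lambda>k. K k y * infsum (\<lambda>m. P m (n-k) y) UNIV) UNIV"
    by (simp add: l1mult_fix_supported[OF Comm_fix_supported[OF K]])
  also have "\<dots> = infsum (\<lambda>k. infsum (\<lambda>m. K k y * P m (n-k) y) UNIV) UNIV"
    by (intro infsum_cong infsum_cmult_right[symmetric] summable_on_norm_bound[OF b(1)] bound)
  also have "\<dots> = infsum (\<lambda>m. infsum (\<lambda>k. K k y * P m (n-k) y) UNIV) UNIV"
    by (rule infsum_swap_banach[OF swap])
  also have "\<dots> = infsum (\<lambda>m. l1mult \<sigma> K (P m) n y) UNIV"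
    by (simp add: l1mult_fix_supported[OF Comm_fix_supported[OF K]])
  finally show ?thesis .
qed

section \<open>The characters psi x z\<close>

lemma psi_apply: "F \<in> Comm \<sigma> \<Longrightarrow> psi \<sigma> (x,z) F = infsum (\<lambda>k. F k x * z powi k) UNIV"
  by (simp add: psi_def)

lemma psi_term_bound:
  assumes "(F :: int \<Rightarrow> 'a \<Rightarrow> complex) \<in> l1" "z \<in> sphere 0 1"
  shows "cmod (F k x * z powi k) \<le> supn (F k)"
  using norm_le_supn_l1[OF assms(1)] assms(2) by (simp add: norm_mult norm_power_int)

lemma psi_summable:
  assumes "(F :: int \<Rightarrow> 'a \<Rightarrow> complex) \<in> l1" "z \<in> sphere 0 1"
  shows "(\<lambda>k. F k x * z powi k) summable_on UNIV"
  by (rule summable_on_norm_bound[OF l1_summable[OF assms(1)]]) (rule psi_term_bound[OF assms])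

lemma psi_monomial:
  "monomial f k \<in> Comm \<sigma> \<Longrightarrow> psi \<sigma> (x,z) (monomial f k) = f x * z powi k"
  unfolding psi_apply by (subst infsum_single[where a=k]) (auto simp: monomial_def)

lemma psi_emb: "continuous_on UNIV f \<Longrightarrow> psi \<sigma> (x,z) (emb f) = f x"
  using psi_monomial[of f 0 x z] emb_Comm by (simp add: emb_eq_monomial)

text \<open>Pointwise the product is a Cauchy product, which psi x z turns into the product of two
  absolutely convergent Laurent series.\<close>

lemma psi_l1mult:
  assumes F: "F \<in> Comm \<sigma>" and G: "G \<in> Comm \<sigma>" and z: "z \<in> sphere 0 1"
  shows "psi \<sigma> (x,z) (l1mult \<sigma> F G) = psi \<sigma> (x,z) F * psi \<sigma> (x,z) G"
proof -
  have Fl: "F \<in> l1" and Gl: "G \<in> l1" using F G by (simp_all add: Comm_l1)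
  have z0: "z \<noteq> 0" using z by auto
  have twist: "infsum (\<lambda>k. F k x * G (n-k) x) UNIV * z powi n
      = infsum (\<lambda>k. (F k x * z powi k) * (G (n-k) x * z powi (n-k))) UNIV" for n
  proof -
    have "cmod (F k x * G (n-k) x) \<le> supn (F k) * l1norm G" for k
      unfolding norm_mult
      by (intro mult_mono norm_le_supn_l1 Fl norm_le_l1norm Gl supn_nonneg_l1 norm_ge_zero)
    then have "(\<lambda>k. F k x * G (n-k) x) summable_on UNIV"
      by (intro summable_on_norm_bound[OF summable_on_cmult_left[OF l1_summable[OF Fl]]])
    then have "infsum (\<lambda>k. F k x * G (n-k) x) UNIV * z powi n
        = infsum (\<lambda>k. F k x * G (n-k) x * z powi n) UNIV"
      by (rule infsum_cmult_left[symmetric])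
    also have "\<dots> = infsum (\<lambda>k. (F k x * z powi k) * (G (n-k) x * z powi (n-k))) UNIV"
      by (rule infsum_cong) (simp add: power_int_add[symmetric] z0)
    finally show ?thesis .
  qed
  have "psi \<sigma> (x,z) (l1mult \<sigma> F G)
      = infsum (\<lambda>n. infsum (\<lambda>k. F k x * G (n-k) x) UNIV * z powi n) UNIV"
    unfolding psi_apply[OF Comm_l1mult(1)[OF F G]]
    by (simp add: l1mult_fix_supported[OF Comm_fix_supported[OF F]])
  also have "\<dots> = psi \<sigma> (x,z) F * psi \<sigma> (x,z) G"
    unfolding twist psi_apply[OF F] psi_apply[OF G]
    by (rule Cauchy_product_int(2)[OF l1_summable[OF Fl] l1_summable[OF Gl] supn_nonneg_l1[OF Fl]
          supn_nonneg_l1[OF Gl] psi_term_bound[OF Fl z] psi_term_bound[OF Gl z]])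
  finally show ?thesis .
qed

lemma psi_in_characters:
  assumes z: "z \<in> sphere 0 1"
  shows "psi \<sigma> (x,z) \<in> characters \<sigma>"
  unfolding characters_def
proof (intro CollectI conjI ballI allI)
  show "psi \<sigma> (x,z) \<in> extensional (Comm \<sigma>)" by (simp add: psi_def)
  show "\<exists>F\<in>Comm \<sigma>. psi \<sigma> (x,z) F \<noteq> 0"
    using l1_one_Comm psi_emb[of "\<lambda>_. 1" x z] unfolding l1_one_def by force
next
  fix F G assume F: "F \<in> Comm \<sigma>" and G: "G \<in> Comm \<sigma>"
  show "psi \<sigma> (x,z) (\<lambda>k x. F k x + G k x) = psi \<sigma> (x,z) F + psi \<sigma> (x,z) G"
    unfolding psi_apply[OF Comm_add[OF F G]] psi_apply[OF F] psi_apply[OF G]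
    by (simp add: distrib_right infsum_add psi_summable[OF Comm_l1[OF F] z] psi_summable[OF Comm_l1[OF G] z])
  show "psi \<sigma> (x,z) (l1mult \<sigma> F G) = psi \<sigma> (x,z) F * psi \<sigma> (x,z) G"
    by (rule psi_l1mult[OF F G z])
next
  fix F and c :: complex assume F: "F \<in> Comm \<sigma>"
  show "psi \<sigma> (x,z) (\<lambda>k x. c * F k x) = c * psi \<sigma> (x,z) F"
    unfolding psi_apply[OF Comm_cmult(1)[OF F]] psi_apply[OF F]
    by (simp add: mult.assoc infsum_cmult_right psi_summable[OF Comm_l1[OF F] z])
qed

section \<open>Characters are bounded\<close>

lemma character_add:
  "\<phi> \<in> characters \<sigma> \<Longrightarrow> F \<in> Comm \<sigma> \<Longrightarrow> G \<in> Comm \<sigma> \<Longrightarrow> \<phi> (\<lambda>k x. F k x + G k x) = \<phi> F + \<phi> G"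
  and character_mult:
  "\<phi> \<in> characters \<sigma> \<Longrightarrow> F \<in> Comm \<sigma> \<Longrightarrow> G \<in> Comm \<sigma> \<Longrightarrow> \<phi> (l1mult \<sigma> F G) = \<phi> F * \<phi> G"
  and character_cmult:
  "\<phi> \<in> characters \<sigma> \<Longrightarrow> F \<in> Comm \<sigma> \<Longrightarrow> \<phi> (\<lambda>k x. c * F k x) = c * \<phi> F"
  and character_extensional: "\<phi> \<in> characters \<sigma> \<Longrightarrow> \<phi> \<in> extensional (Comm \<sigma>)"
  by (simp_all add: characters_def)

lemma character_zero: "\<phi> \<in> characters \<sigma> \<Longrightarrow> \<phi> (\<lambda>k x. 0) = 0"
  using character_cmult[OF _ l1_one_Comm, of \<phi> 0] by simp

lemma character_l1_one: "\<phi> \<in> characters \<sigma> \<Longrightarrow> \<phi> l1_one = 1"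
proof -
  assume p: "\<phi> \<in> characters \<sigma>"
  then obtain F where F: "F \<in> Comm \<sigma>" "\<phi> F \<noteq> 0" by (auto simp: characters_def)
  have "\<phi> F = \<phi> l1_one * \<phi> F" using character_mult[OF p l1_one_Comm F(1)] l1mult_one_left by simp
  then show ?thesis using F(2) by simp
qed

text \<open>The Neumann series \<open>\<Sum>m. K^m\<close> inverts \<open>l1_one - K\<close> when the l1 norm of K is below 1.\<close>

lemma neumann_series:
  assumes K: "K \<in> Comm \<sigma>" and r: "l1norm K < 1"
  obtains S where "S \<in> Comm \<sigma>" "S = (\<lambda>k x. l1_one k x + l1mult \<sigma> K S k x)"
proof -
  define r where "r = l1norm K"
  have r0: "0 \<le> r" using l1norm_nonneg[OF Comm_l1[OF K]] by (simp add: r_def)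
  define Kp where "Kp m = (l1mult \<sigma> K ^^ m) l1_one" for m
  have Kp_Suc: "Kp (Suc m) = l1mult \<sigma> K (Kp m)" for m by (simp add: Kp_def)
  have Kp: "Kp m \<in> Comm \<sigma>" for m
    by (induction m) (simp_all add: Kp_def l1_one_Comm Comm_l1mult(1)[OF K])
  have Kp_norm: "l1norm (Kp m) \<le> r ^ m" for m
  proof (induction m)
    case 0 then show ?case using l1norm_l1_one by (simp add: Kp_def)
  next
    case (Suc m)
    have "l1norm (Kp (Suc m)) \<le> r * l1norm (Kp m)"
      unfolding Kp_Suc r_def by (rule Comm_l1mult(2)[OF K Kp])
    also have "\<dots> \<le> r * r ^ m" by (rule mult_left_mono[OF Suc r0])
    finally show ?case by simp
  qed
  have geo: "(\<lambda>m. r ^ m) summable_on UNIV"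
    by (rule summable_nonneg_imp_summable_on) (use r0 r in \<open>auto simp: r_def\<close>)
  define S where "S = (\<lambda>k y. infsum (\<lambda>m. Kp m k y) UNIV)"
  have S: "S \<in> Comm \<sigma>" unfolding S_def by (rule Comm_infsum[OF Kp geo Kp_norm])
  have Kp_bound: "cmod (Kp m k y) \<le> r ^ m" for m k y
    using norm_le_l1norm[OF Comm_l1[OF Kp]] Kp_norm by (rule order_trans)
  have Kp_summable: "(\<lambda>m. Kp m k y) summable_on UNIV" for k y
    by (rule summable_on_norm_bound[OF geo]) (rule Kp_bound)
  have "S n y = l1_one n y + l1mult \<sigma> K S n y" for n y
  proof -
    have "l1mult \<sigma> K S n y = infsum (\<lambda>m. l1mult \<sigma> K (Kp m) n y) UNIV"
      unfolding S_def by (rule l1mult_infsum_right[OF K Kp geo _ Kp_norm]) (simp add: r0)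
    also have "\<dots> = infsum (\<lambda>m. Kp (Suc m) n y) UNIV"
      by (simp add: Kp_Suc)
    also have "\<dots> = S n y - l1_one n y"
      unfolding S_def by (subst infsum_shift_Suc[OF Kp_summable]) (simp add: Kp_def)
    finally show ?thesis by simp
  qed
  then show ?thesis using that[OF S] by blast
qed

lemma character_ne_1_if_l1norm_less_1:
  assumes p: "\<phi> \<in> characters \<sigma>" and K: "K \<in> Comm \<sigma>" and "l1norm K < 1"
  shows "\<phi> K \<noteq> 1"
proof
  assume "\<phi> K = 1"
  obtain S where S: "S \<in> Comm \<sigma>" and eq: "S = (\<lambda>k x. l1_one k x + l1mult \<sigma> K S k x)"
    using neumann_series[OF K \<open>l1norm K < 1\<close>] .
  have "\<phi> S = \<phi> l1_one + \<phi> (l1mult \<sigma> K S)"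
    by (subst eq) (rule character_add[OF p l1_one_Comm Comm_l1mult(1)[OF K S]])
  also have "\<dots> = 1 + \<phi> S" using character_l1_one[OF p] character_mult[OF p K S] \<open>\<phi> K = 1\<close> by simp
  finally show False by simp
qed

lemma character_norm_le:
  assumes p: "\<phi> \<in> characters \<sigma>" and F: "F \<in> Comm \<sigma>"
  shows "cmod (\<phi> F) \<le> l1norm F"
proof (rule ccontr)
  assume "\<not> cmod (\<phi> F) \<le> l1norm F"
  then have lt: "l1norm F < cmod (\<phi> F)" by simp
  then have nz: "\<phi> F \<noteq> 0" using l1norm_nonneg[OF Comm_l1[OF F]] by auto
  define K where "K = (\<lambda>k x. (1 / \<phi> F) * F k x)"
  have K: "K \<in> Comm \<sigma>" unfolding K_def by (rule Comm_cmult(1)[OF F])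
  have "\<phi> K = (1 / \<phi> F) * \<phi> F" unfolding K_def by (rule character_cmult[OF p F])
  then have "\<phi> K = 1" using nz by simp
  moreover have "l1norm K < 1"
  proof -
    have "l1norm K \<le> cmod (1 / \<phi> F) * l1norm F" unfolding K_def by (rule Comm_cmult(2)[OF F])
    also have "\<dots> < 1" using lt nz by (simp add: norm_divide)
    finally show ?thesis .
  qed
  ultimately show False using character_ne_1_if_l1norm_less_1[OF p K] by blast
qed

section \<open>Every character is some psi x z\<close>

lemma character_emb_const: "\<phi> \<in> characters \<sigma> \<Longrightarrow> \<phi> (emb (\<lambda>_. c)) = c"
proof -
  assume p: "\<phi> \<in> characters \<sigma>"
  have e: "emb (\<lambda>_. c) = (\<lambda>k x. c * l1_one k x)" by (auto simp: l1_one_def emb_def fun_eq_iff)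
  show ?thesis unfolding e using character_cmult[OF p l1_one_Comm, of c] character_l1_one[OF p] by simp
qed

lemma character_emb_add:
  assumes "\<phi> \<in> characters \<sigma>" "continuous_on UNIV f" "continuous_on UNIV g"
  shows "\<phi> (emb (\<lambda>y. f y + g y)) = \<phi> (emb f) + \<phi> (emb g)"
proof -
  have "emb (\<lambda>y. f y + g y) = (\<lambda>k x. emb f k x + emb g k x)" by (auto simp: emb_def fun_eq_iff)
  then show ?thesis using character_add[OF assms(1) emb_Comm[OF assms(2)] emb_Comm[OF assms(3)]] by simp
qed

lemma character_emb_mult:
  assumes "\<phi> \<in> characters \<sigma>" "continuous_on UNIV f" "continuous_on UNIV g"
  shows "\<phi> (emb (\<lambda>y. f y * g y)) = \<phi> (emb f) * \<phi> (emb g)"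
proof -
  have "emb (\<lambda>y. f y * g y) = l1mult \<sigma> (emb f) (emb g)"
    unfolding l1mult_emb_left by (auto simp: emb_def fun_eq_iff)
  then show ?thesis using character_mult[OF assms(1) emb_Comm[OF assms(2)] emb_Comm[OF assms(3)]] by simp
qed

lemma character_emb_sum:
  assumes p: "\<phi> \<in> characters \<sigma>" and "finite G" "\<And>g. g \<in> G \<Longrightarrow> continuous_on UNIV (P g)"
  shows "\<phi> (emb (\<lambda>y. \<Sum>g\<in>G. P g y)) = (\<Sum>g\<in>G. \<phi> (emb (P g)))"
  using assms(2,3)
proof (induction G rule: finite_induct)
  case empty then show ?case using character_emb_const[OF p, of 0] by simp
next
  case (insert a G)
  have "\<phi> (emb (\<lambda>y. P a y + (\<Sum>g\<in>G. P g y))) = \<phi> (emb (P a)) + \<phi> (emb (\<lambda>y. \<Sum>g\<in>G. P g y))"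
    by (rule character_emb_add[OF p]) (use insert in \<open>auto intro!: continuous_intros\<close>)
  then show ?case using insert by simp
qed

text \<open>Otherwise \<open>\<Sum>g\<in>G. g * cnj g\<close> would be invertible in C(X) yet killed by the character.\<close>

lemma character_emb_common_zero:
  assumes p: "\<phi> \<in> characters \<sigma>" and G: "finite G"
    and cont: "\<And>g. g \<in> G \<Longrightarrow> continuous_on UNIV g" and zero: "\<And>g. g \<in> G \<Longrightarrow> \<phi> (emb g) = 0"
  shows "\<exists>y. \<forall>g\<in>G. g y = 0"
proof (rule ccontr)
  assume "\<not> ?thesis"
  then have cover: "\<exists>g\<in>G. g y \<noteq> 0" for y by blast
  define h where "h = (\<lambda>y. \<Sum>g\<in>G. g y * cnj (g y))"
  have hc: "continuous_on UNIV h" unfolding h_def by (intro continuous_intros cont)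
  have "\<phi> (emb h) = (\<Sum>g\<in>G. \<phi> (emb (\<lambda>y. g y * cnj (g y))))"
    unfolding h_def by (rule character_emb_sum[OF p G]) (intro continuous_intros cont)
  also have "\<dots> = (\<Sum>g\<in>G. \<phi> (emb g) * \<phi> (emb (\<lambda>y. cnj (g y))))"
    by (intro sum.cong refl character_emb_mult[OF p cont continuous_on_cnj[OF cont]])
  finally have h0: "\<phi> (emb h) = 0" using zero by simp
  have hpos: "h y \<noteq> 0" for y
  proof -
    obtain g where g: "g \<in> G" "g y \<noteq> 0" using cover by blast
    have "Re (h y) = (\<Sum>g\<in>G. (cmod (g y))\<^sup>2)"
      unfolding h_def by (simp add: Re_sum complex_mult_cnj cmod_power2)
    also have "\<dots> > 0" by (rule sum_pos2[OF G g(1)]) (use g in auto)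
    finally show ?thesis by auto
  qed
  have ic: "continuous_on UNIV (\<lambda>y. 1 / h y)" by (intro continuous_intros hc) (use hpos in auto)
  have "\<phi> (emb (\<lambda>y. h y * (1 / h y))) = \<phi> (emb h) * \<phi> (emb (\<lambda>y. 1 / h y))"
    by (rule character_emb_mult[OF p hc ic])
  moreover have "\<phi> (emb (\<lambda>y. h y * (1 / h y))) = 1"
    using hpos character_emb_const[OF p, of 1] by simp
  ultimately show False using h0 by simp
qed

lemma character_point_evaluation:
  assumes p: "\<phi> \<in> characters \<sigma>"
  obtains x where "\<And>f. continuous_on UNIV f \<Longrightarrow> \<phi> (emb f) = f x"
proof -
  define Z where "Z = {g :: 'a \<Rightarrow> complex. continuous_on UNIV g \<and> \<phi> (emb g) = 0}"
  have "\<exists>x. \<forall>g\<in>Z. g x = 0"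
  proof (rule ccontr)
    assume "\<not> ?thesis"
    then have "UNIV \<subseteq> (\<Union>g\<in>Z. {y. g y \<noteq> 0})" by blast
    moreover have "open {y. g y \<noteq> 0}" if "g \<in> Z" for g
      using open_Collect_neq[of g "\<lambda>_. 0"] that by (simp add: Z_def)
    ultimately obtain G where G: "G \<subseteq> Z" "finite G" "UNIV \<subseteq> (\<Union>g\<in>G. {y. g y \<noteq> 0})"
      using compactE_image[OF compact_UNIV, of Z "\<lambda>g. {y. g y \<noteq> 0}"] by metis
    then show False
      using character_emb_common_zero[OF p G(2)] by (auto simp: Z_def subset_iff)
  qed
  then obtain x where x: "\<And>g. g \<in> Z \<Longrightarrow> g x = 0" by blast
  have "\<phi> (emb f) = f x" if f: "continuous_on UNIV f" for f
  proof -
    have "\<phi> (emb (\<lambda>y. f y + - \<phi> (emb f))) = 0"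
      using character_emb_add[OF p f, of "\<lambda>_. - \<phi> (emb f)"] character_emb_const[OF p] by simp
    then have "(\<lambda>y. f y + - \<phi> (emb f)) \<in> Z" using f by (auto simp: Z_def intro!: continuous_intros)
    then show ?thesis using x by fastforce
  qed
  then show ?thesis using that by blast
qed

lemma character_monomial_annihilated:
  assumes p: "\<phi> \<in> characters \<sigma>" and x: "\<And>f. continuous_on UNIV f \<Longrightarrow> \<phi> (emb f) = f x"
    and M: "monomial g k \<in> Comm \<sigma>"
    and u: "continuous_on UNIV u" "u x = 1" "\<And>y. u y * g y = 0"
  shows "\<phi> (monomial g k) = 0"
proof -
  have "l1mult \<sigma> (emb u) (monomial g k) = (\<lambda>j y. 0 * l1_one j y)"
    unfolding l1mult_emb_left using u(3) by (auto simp: monomial_def fun_eq_iff)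
  then have "\<phi> (emb u) * \<phi> (monomial g k) = 0"
    using character_mult[OF p emb_Comm[OF u(1)] M] character_cmult[OF p l1_one_Comm, of 0] by simp
  then show ?thesis using x[OF u(1)] u(2) by simp
qed

text \<open>Split f = f r + f (1 - r) with a cutoff r: the first part vanishes near x and is annihilated
  by a bump at x, the second part is small in norm.\<close>

lemma character_monomial_small:
  assumes p: "\<phi> \<in> characters \<sigma>" and x: "\<And>f. continuous_on UNIV f \<Longrightarrow> \<phi> (emb f) = f x"
    and M: "monomial f k \<in> Comm \<sigma>" and fx: "f x = 0" and e: "e > 0"
  shows "cmod (\<phi> (monomial f k)) \<le> 2 * e"
proof -
  have fc: "continuous_on UNIV f" and fP: "\<And>y. f y \<noteq> 0 \<Longrightarrow> y \<in> Fix \<sigma> k"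
    using monomial_Comm_D[OF M] by auto
  obtain r where r: "continuous_on UNIV r" "\<And>y. 0 \<le> r y" "\<And>y. r y \<le> 1"
    "\<And>y. cmod (f y) < e \<Longrightarrow> r y = 0" "\<And>y. cmod (f y) * (1 - r y) \<le> 2 * e"
    using cutoff_function[OF fc e] by blast
  define f1 where "f1 = (\<lambda>y. f y * complex_of_real (r y))"
  define f2 where "f2 = (\<lambda>y. f y * (1 - complex_of_real (r y)))"
  have M1: "monomial f1 k \<in> Comm \<sigma>" and M2: "monomial f2 k \<in> Comm \<sigma>"
    unfolding f1_def f2_def by (auto intro!: monomial_Comm continuous_intros fc r(1) fP)
  have "monomial f k = (\<lambda>j y. monomial f1 k j y + monomial f2 k j y)"
    unfolding monomial_add[symmetric] by (simp add: f1_def f2_def algebra_simps)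
  then have split: "\<phi> (monomial f k) = \<phi> (monomial f1 k) + \<phi> (monomial f2 k)"
    using character_add[OF p M1 M2] by simp
  have "closed {y. e \<le> cmod (f y)}" by (intro closed_Collect_le continuous_intros fc)
  moreover have "{x} \<inter> {y. e \<le> cmod (f y)} = {}" using fx e by auto
  ultimately obtain u :: "'a \<Rightarrow> real" where u: "continuous_on UNIV u" "u x = 1"
    "\<And>y. e \<le> cmod (f y) \<Longrightarrow> u y = 0"
    using Urysohn_function[OF closed_singleton] by (metis insertI1 mem_Collect_eq)
  have "u y * f1 y = 0" for y
    using u(3)[of y] r(4)[of y] by (cases "e \<le> cmod (f y)") (auto simp: f1_def)
  then have "\<phi> (monomial f1 k) = 0"
    by (intro character_monomial_annihilated[OF p x M1, of "\<lambda>y. complex_of_real (u y)"])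
       (auto intro: continuous_intros u(1) simp: u(2))
  moreover have "cmod (f2 y) \<le> 2 * e" for y
  proof -
    have "cmod (1 - complex_of_real (r y)) = 1 - r y"
      using r(3)[of y] by (metis abs_of_nonneg diff_ge_0_iff_ge norm_of_real of_real_1 of_real_diff)
    then show ?thesis using r(5)[of y] by (simp add: f2_def norm_mult)
  qed
  then have "cmod (\<phi> (monomial f2 k)) \<le> 2 * e"
    using character_norm_le[OF p M2] supn_le[of f2 "2 * e"] l1norm_monomial[of f2 k] by simp
  ultimately show ?thesis using split by simp
qed

lemma character_monomial_vanishes:
  assumes p: "\<phi> \<in> characters \<sigma>" and x: "\<And>f. continuous_on UNIV f \<Longrightarrow> \<phi> (emb f) = f x"
    and M: "monomial f k \<in> Comm \<sigma>" and fx: "f x = 0"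
  shows "\<phi> (monomial f k) = 0"
proof -
  have "cmod (\<phi> (monomial f k)) \<le> 0 + e" if "e > 0" for e
    using character_monomial_small[OF p x M fx, of "e / 2"] that by simp
  then have "cmod (\<phi> (monomial f k)) \<le> 0" by (rule field_le_epsilon)
  then show ?thesis by simp
qed

lemma bump_function:
  assumes "open U" "x \<in> U"
  obtains u :: "'a \<Rightarrow> complex" where "continuous_on UNIV u" "\<And>y. cmod (u y) \<le> 1" "u x = 1"
    "\<And>y. u y \<noteq> 0 \<Longrightarrow> y \<in> U"
proof -
  have cl: "closed (- U)" and dj: "{x} \<inter> - U = {}" using assms by auto
  obtain v :: "'a \<Rightarrow> real" where v: "continuous_on UNIV v" "\<And>y. v y \<in> {0..1}"
    "\<And>y. y \<in> {x} \<Longrightarrow> v y = 1" "\<And>y. y \<in> - U \<Longrightarrow> v y = 0"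
    using Urysohn_function[OF closed_singleton cl dj] by blast
  show ?thesis
  proof (rule that[of "\<lambda>y. complex_of_real (v y)"])
    show "continuous_on UNIV (\<lambda>y. complex_of_real (v y))" by (intro continuous_intros v(1))
    show "cmod (complex_of_real (v y)) \<le> 1" for y using v(2)[of y] by auto
  qed (use v in auto)
qed

lemma bump_power_Comm:
  assumes "continuous_on UNIV u" "\<And>y. u y \<noteq> 0 \<Longrightarrow> y \<in> interior (Fix \<sigma> n)"
  shows "monomial (\<lambda>y. u y ^ nat \<bar>j\<bar>) (j * n) \<in> Comm \<sigma>"
proof (rule monomial_Comm_interior)
  show "continuous_on UNIV (\<lambda>y. u y ^ nat \<bar>j\<bar>)" by (intro continuous_intros assms(1))
  show "y \<in> interior (Fix \<sigma> (j * n))" if "u y ^ nat \<bar>j\<bar> \<noteq> 0" for y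
    using interior_Fix_mult[OF assms(2), of y j] that by (cases "j = 0") (simp_all add: mult.commute)
qed

lemma bump_power_l1mult:
  assumes u: "continuous_on UNIV u" "\<And>y. u y \<noteq> 0 \<Longrightarrow> y \<in> interior (Fix \<sigma> n)"
    and s: "s = 1 \<or> s = -1" "0 \<le> s * j"
  shows "l1mult \<sigma> (monomial (\<lambda>y. u y ^ nat \<bar>s\<bar>) (s * n)) (monomial (\<lambda>y. u y ^ nat \<bar>j\<bar>) (j * n))
    = monomial (\<lambda>y. u y ^ nat \<bar>s + j\<bar>) ((s + j) * n)"
proof -
  have "nat \<bar>s + j\<bar> = Suc (nat \<bar>j\<bar>)" using s by (auto simp: zero_le_mult_iff)
  then show ?thesis
    using l1mult_monomial[OF bump_power_Comm[OF u, of s]] s(1) by (auto simp: algebra_simps)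
qed

text \<open>The values of the character at u delta^n and u delta^(-n) have norm at most 1 and product
  phi (emb (u^2)) = u(x)^2 = 1, so they lie on the unit circle.\<close>

lemma character_bump_powers:
  assumes p: "\<phi> \<in> characters \<sigma>" and x: "\<And>f. continuous_on UNIV f \<Longrightarrow> \<phi> (emb f) = f x"
    and u: "continuous_on UNIV u" "\<And>y. cmod (u y) \<le> 1" "u x = 1"
      "\<And>y. u y \<noteq> 0 \<Longrightarrow> y \<in> interior (Fix \<sigma> n)"
  obtains c where "cmod c = 1" "\<And>j. \<phi> (monomial (\<lambda>y. u y ^ nat \<bar>j\<bar>) (j * n)) = c powi j"
proof -
  define W where "W j = monomial (\<lambda>y. u y ^ nat \<bar>j\<bar>) (j * n)" for j
  have W: "W j \<in> Comm \<sigma>" for j unfolding W_def by (rule bump_power_Comm[OF u(1,4)])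
  have W_iter: "\<phi> (W (s * int m)) = \<phi> (W s) ^ m" if s: "s = 1 \<or> s = -1" for s m
  proof (induction m)
    case 0 then show ?case
      using character_l1_one[OF p] by (simp add: W_def emb_eq_monomial[symmetric] l1_one_def)
  next
    case (Suc m)
    have "W (s * int (Suc m)) = l1mult \<sigma> (W s) (W (s * int m))"
      using bump_power_l1mult[OF u(1,4) s, of "s * int m"] s by (auto simp: W_def algebra_simps)
    then show ?case using character_mult[OF p W W] Suc by simp
  qed
  define c where "c = \<phi> (W 1)"
  define d where "d = \<phi> (W (-1))"
  have "l1mult \<sigma> (W 1) (W (-1)) = emb (\<lambda>y. u y * u y)"
    using l1mult_monomial[of u n] W[of 1] by (simp add: W_def emb_eq_monomial)
  then have cd: "c * d = 1"
    using character_mult[OF p W W, of 1 "-1"] x[of "\<lambda>y. u y * u y"] u(3)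
    by (simp add: c_def d_def continuous_intros u(1))
  have "l1norm (W 1) \<le> 1" "l1norm (W (-1)) \<le> 1"
    using supn_le[of u 1] u(2) by (auto simp: W_def l1norm_monomial)
  then have "cmod c \<le> 1" "cmod d \<le> 1"
    unfolding c_def d_def using character_norm_le[OF p W] order_trans by blast+
  then have cn: "cmod c = 1"
    using cd mult_left_le[of "cmod d" "cmod c"] by (metis norm_ge_zero norm_mult norm_one order_antisym)
  have "\<phi> (W j) = c powi j" for j
  proof (cases "0 \<le> j")
    case True
    then obtain m where "j = int m" using nonneg_int_cases by blast
    then show ?thesis using W_iter[of 1 m] by (simp add: c_def)
  next
    case False
    then obtain m where m: "j = - int m" by (metis minus_minus nat_0_le neg_0_le_iff_le nle_le)
    have "c \<noteq> 0" using cn by auto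
    then have "d = inverse c" using cd by (simp add: field_simps)
    then have "c powi (- int m) = d ^ m" by (simp add: power_int_minus power_inverse)
    then show ?thesis using W_iter[of "-1" m] m by (simp add: d_def)
  qed
  then show ?thesis using that[OF cn] by (simp add: W_def)
qed

lemma character_monomial_Per:
  assumes p: "\<phi> \<in> characters \<sigma>" and x: "\<And>f. continuous_on UNIV f \<Longrightarrow> \<phi> (emb f) = f x"
    and xP: "x \<in> Per \<sigma>"
  obtains z where "z \<in> sphere 0 1"
    "\<And>f k. monomial f k \<in> Comm \<sigma> \<Longrightarrow> \<phi> (monomial f k) = f x * z powi k"
proof -
  define n where "n = nmin \<sigma> x"
  obtain u where u: "continuous_on UNIV u" "\<And>y. cmod (u y) \<le> 1" "u x = 1"
    "\<And>y. u y \<noteq> 0 \<Longrightarrow> y \<in> interior (Fix \<sigma> (int n))"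
    using bump_function[OF open_interior interior_Fix_nmin[OF xP]] unfolding n_def by blast
  obtain c where cn: "cmod c = 1" and W: "\<And>j. \<phi> (monomial (\<lambda>y. u y ^ nat \<bar>j\<bar>) (j * int n)) = c powi j"
    using character_bump_powers[OF p x u] by blast
  obtain z where z: "z ^ n = c" "z \<in> sphere 0 1"
    using sphere_nth_root[OF cn, of n] nmin_ge_1[OF xP] by (auto simp: n_def)
  have "\<phi> (monomial f k) = f x * z powi k" if M: "monomial f k \<in> Comm \<sigma>" for f k
  proof (cases "x \<in> interior (Fix \<sigma> k)")
    case False
    then have "f x = 0" using Comm_coeff_vanishes[OF M, of x k] by (simp add: monomial_def)
    then show ?thesis using character_monomial_vanishes[OF p x M] by simp
  next
    case True
    then obtain j where kj: "k = j * int n" using nmin_dvd[OF xP] by (metis n_def dvd_def mult.commute)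
    have fc: "continuous_on UNIV f" and fP: "\<And>y. f y \<noteq> 0 \<Longrightarrow> y \<in> Fix \<sigma> k"
      using monomial_Comm_D[OF M] by auto
    define U where "U = monomial (\<lambda>y. u y ^ nat \<bar>j\<bar>) k"
    define g where "g = (\<lambda>y. f y * (1 - u y ^ nat \<bar>j\<bar>))"
    have U: "U \<in> Comm \<sigma>"
      unfolding U_def kj using u(4) interior_Fix_mult[of _ "int n" j]
      by (intro monomial_Comm_interior continuous_intros u(1)) (auto simp: mult.commute)
    have G: "monomial g k \<in> Comm \<sigma>"
      unfolding g_def by (intro monomial_Comm continuous_intros fc u(1)) (auto intro: fP)
    have "monomial f k = (\<lambda>i y. l1mult \<sigma> (emb f) U i y + monomial g k i y)"
      unfolding l1mult_emb_left by (auto simp: U_def monomial_def g_def fun_eq_iff algebra_simps)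
    then have "\<phi> (monomial f k) = \<phi> (emb f) * \<phi> U + \<phi> (monomial g k)"
      using character_add[OF p Comm_l1mult(1)[OF emb_Comm[OF fc] U] G]
        character_mult[OF p emb_Comm[OF fc] U] by simp
    also have "\<dots> = f x * c powi j"
      using x[OF fc] W[of j] character_monomial_vanishes[OF p x G] u(3)
      by (simp add: U_def kj g_def)
    also have "\<dots> = f x * z powi k"
      by (simp add: kj mult.commute[of j] power_int_mult z(1))
    finally show ?thesis .
  qed
  then show ?thesis using that[OF z(2)] by blast
qed

lemma character_monomial_not_Per:
  assumes p: "\<phi> \<in> characters \<sigma>" and x: "\<And>f. continuous_on UNIV f \<Longrightarrow> \<phi> (emb f) = f x"
    and xP: "x \<notin> Per \<sigma>" and M: "monomial f k \<in> Comm \<sigma>"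
  shows "\<phi> (monomial f k) = f x * 1 powi k"
proof (cases "k = 0")
  case True
  then show ?thesis using x[OF monomial_Comm_D(1)[OF M]] by (simp add: emb_eq_monomial)
next
  case False
  then have "f x = 0"
    using Comm_coeff_vanishes[OF M interior_Fix_not_Per[OF xP False]] by (simp add: monomial_def)
  then show ?thesis using character_monomial_vanishes[OF p x M] by simp
qed

lemma characters_eq_on_restrict_index:
  assumes p: "\<phi> \<in> characters \<sigma>" and q: "\<theta> \<in> characters \<sigma>" and F: "F \<in> Comm \<sigma>"
    and eq: "\<And>f k. monomial f k \<in> Comm \<sigma> \<Longrightarrow> \<phi> (monomial f k) = \<theta> (monomial f k)"
    and "finite A"
  shows "\<phi> (restrict_index A F) = \<theta> (restrict_index A F)"
  using \<open>finite A\<close>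
proof (induction A rule: finite_induct)
  case empty
  have "restrict_index {} F = (\<lambda>k x. 0)" by (simp add: restrict_index_def fun_eq_iff)
  then show ?case using character_zero[OF p] character_zero[OF q] by simp
next
  case (insert a A)
  show ?case
    unfolding restrict_index_insert[OF insert(2)]
    using insert(3) eq[OF monomial_coeff_Comm[OF F]]
      character_add[OF p monomial_coeff_Comm[OF F] restrict_index_Comm[OF F]]
      character_add[OF q monomial_coeff_Comm[OF F] restrict_index_Comm[OF F]] by simp
qed

text \<open>Characters are continuous for the l1 norm, and the finite partial sums of F converge to F.\<close>

lemma character_eqI_monomials:
  assumes p: "\<phi> \<in> characters \<sigma>" and q: "\<theta> \<in> characters \<sigma>"
    and eq: "\<And>f k. monomial f k \<in> Comm \<sigma> \<Longrightarrow> \<phi> (monomial f k) = \<theta> (monomial f k)"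
  shows "\<phi> = \<theta>"
proof (rule extensionalityI[OF character_extensional[OF p] character_extensional[OF q]])
  fix F assume F: "F \<in> Comm \<sigma>"
  have "cmod (\<phi> F - \<theta> F) \<le> 2 * e" if e: "e > 0" for e
  proof -
    obtain A where A: "finite A" "l1norm F - sum (\<lambda>k. supn (F k)) A < e"
      using eventually_happens'[OF finite_subsets_at_top_neq_bot
          eventually_infsum_tail_less[OF l1_summable[OF Comm_l1[OF F]] e]]
      by (auto simp: l1norm_def)
    have R: "restrict_index A F \<in> Comm \<sigma>" "restrict_index (-A) F \<in> Comm \<sigma>"
      by (simp_all add: restrict_index_Comm F)
    have "\<phi> F = \<phi> (restrict_index A F) + \<phi> (restrict_index (-A) F)"
      by (subst restrict_index_split[of F A]) (rule character_add[OF p R])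
    moreover have "\<theta> F = \<theta> (restrict_index A F) + \<theta> (restrict_index (-A) F)"
      by (subst restrict_index_split[of F A]) (rule character_add[OF q R])
    ultimately have "\<phi> F - \<theta> F = \<phi> (restrict_index (-A) F) - \<theta> (restrict_index (-A) F)"
      using characters_eq_on_restrict_index[OF p q F eq A(1)] by simp
    also have "cmod \<dots> \<le> l1norm (restrict_index (-A) F) + l1norm (restrict_index (-A) F)"
      using norm_triangle_ineq4 add_mono[OF character_norm_le[OF p R(2)] character_norm_le[OF q R(2)]]
      by (rule order_trans)
    also have "\<dots> \<le> 2 * e" using l1norm_restrict_index_Compl[OF F A(1)] A(2) by simp
    finally show ?thesis .
  qed
  then have "cmod (\<phi> F - \<theta> F) \<le> 0 + e" if "e > 0" for e
    using that by (metis add_0 field_sum_of_halves half_gt_zero mult_2)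
  then have "cmod (\<phi> F - \<theta> F) \<le> 0" by (rule field_le_epsilon)
  then show "\<phi> F = \<theta> F" by simp
qed

lemma character_eq_psi:
  assumes p: "\<phi> \<in> characters \<sigma>"
  obtains x z where "z \<in> sphere 0 1" "\<phi> = psi \<sigma> (x,z)"
proof -
  obtain x where x: "\<And>f. continuous_on UNIV f \<Longrightarrow> \<phi> (emb f) = f x"
    using character_point_evaluation[OF p] by blast
  obtain z where z: "z \<in> sphere 0 1"
    and val: "\<And>f k. monomial f k \<in> Comm \<sigma> \<Longrightarrow> \<phi> (monomial f k) = f x * z powi k"
  proof (cases "x \<in> Per \<sigma>")
    case True then show ?thesis using character_monomial_Per[OF p x] that by blast
  next
    case False then show ?thesis using character_monomial_not_Per[OF p x] that[of 1] by simp
  qed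
  have "\<phi> = psi \<sigma> (x,z)"
    by (rule character_eqI_monomials[OF p psi_in_characters[OF z]]) (simp add: val psi_monomial)
  then show ?thesis using that[OF z] by blast
qed

end

section \<open>Topology and fibres of psi\<close>

lemma XT_eq: "(XT :: ('a::topological_space \<times> complex) topology) = top_of_set (UNIV \<times> sphere 0 1)"
  unfolding XT_def by (metis prod_topology_subtopology_eu subtopology_UNIV)

lemma topspace_XT: "topspace (XT :: ('a::topological_space \<times> complex) topology) = UNIV \<times> sphere 0 1"
  by (simp add: XT_eq)

lemma Hausdorff_gelfand_top: "Hausdorff_space (gelfand_top \<sigma>)"
  unfolding gelfand_top_def
  by (intro Hausdorff_space_subtopology) (simp add: Hausdorff_space_product_topology)

context compact_bijective_map
begin

lemma compact_space_XT: "compact_space (XT :: ('a \<times> complex) topology)"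
  using compact_Times[OF compact_UNIV compact_sphere[of 0 1]] unfolding XT_eq compact_space_def by simp

lemma topspace_gelfand_top: "topspace (gelfand_top \<sigma>) = characters \<sigma>"
  using character_extensional unfolding gelfand_top_def by (auto simp: topspace_subtopology PiE_def)

lemma continuous_on_psi_apply:
  assumes F: "F \<in> Comm \<sigma>"
  shows "continuous_on (UNIV \<times> sphere 0 1) (\<lambda>p. psi \<sigma> p F)"
proof -
  have Fl: "F \<in> l1" using F by (rule Comm_l1)
  have "continuous_on (UNIV \<times> sphere 0 1) (\<lambda>p. infsum (\<lambda>k. F k (fst p) * snd p powi k) UNIV)"
  proof (rule continuous_on_infsum_M_test[OF _ l1_summable[OF Fl]])
    fix k
    have "continuous_on (UNIV \<times> sphere 0 1) (\<lambda>p. F k (fst p))"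
      by (rule continuous_on_compose2[OF l1_continuous[OF Fl] continuous_on_fst]) auto
    moreover have "continuous_on (UNIV \<times> sphere 0 1) (\<lambda>p::'a \<times> complex. snd p powi k)"
      by (intro continuous_intros) auto
    ultimately show "continuous_on (UNIV \<times> sphere 0 1) (\<lambda>p. F k (fst p) * snd p powi k)"
      by (rule continuous_on_mult)
    fix p :: "'a \<times> complex" assume "p \<in> UNIV \<times> sphere 0 1"
    then show "cmod (F k (fst p) * snd p powi k) \<le> supn (F k)"
      using psi_term_bound[OF Fl, of "snd p" k "fst p"] by auto
  qed
  then show ?thesis
    by (rule continuous_on_cong[THEN iffD1, rotated 2]) (auto simp: psi_apply[OF F])
qed

lemma continuous_map_psi: "continuous_map XT (gelfand_top \<sigma>) (psi \<sigma>)"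
  unfolding gelfand_top_def continuous_map_in_subtopology
proof
  show "continuous_map XT (product_topology (\<lambda>_. euclidean) (Comm \<sigma>)) (psi \<sigma>)"
    unfolding continuous_map_componentwise
    using continuous_on_psi_apply by (auto simp: XT_eq psi_def)
  show "psi \<sigma> \<in> topspace XT \<rightarrow> characters \<sigma>"
    using psi_in_characters by (auto simp: topspace_XT)
qed

lemma psi_image: "psi \<sigma> ` topspace XT = characters \<sigma>"
proof
  show "psi \<sigma> ` topspace XT \<subseteq> characters \<sigma>" using psi_in_characters by (auto simp: topspace_XT)
  show "characters \<sigma> \<subseteq> psi \<sigma> ` topspace XT"
  proof
    fix \<phi> assume "\<phi> \<in> characters \<sigma>"
    then obtain x z where "z \<in> sphere 0 1" "\<phi> = psi \<sigma> (x,z)" by (rule character_eq_psi)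
    then show "\<phi> \<in> psi \<sigma> ` topspace XT" by (auto simp: topspace_XT)
  qed
qed

lemma quotient_map_psi: "quotient_map XT (gelfand_top \<sigma>) (psi \<sigma>)"
  by (rule continuous_closed_imp_quotient_map[OF continuous_map_psi
        continuous_imp_closed_map[OF continuous_map_psi compact_space_XT Hausdorff_gelfand_top]])
     (simp add: psi_image topspace_gelfand_top)

lemma psi_emb_eq_point:
  assumes "\<And>f. continuous_on UNIV f \<Longrightarrow> psi \<sigma> (y,z) (emb f) = f x"
  shows "y = x"
proof (rule ccontr)
  assume "y \<noteq> x"
  then obtain f :: "'a \<Rightarrow> complex" where f: "continuous_on UNIV f" "f y = 1" "f x = 0"
    by (rule separating_function)
  then show False using assms[OF f(1)] psi_emb[OF f(1)] by simp
qed

lemma psi_eq_omega1: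
  assumes "x \<notin> Per \<sigma>" "z \<in> sphere 0 1"
  shows "psi \<sigma> (x,z) = omega1 \<sigma> x"
proof (rule extensionalityI[OF character_extensional[OF psi_in_characters[OF assms(2)]]])
  show "omega1 \<sigma> x \<in> extensional (Comm \<sigma>)" by (simp add: omega1_def)
  fix F assume F: "F \<in> Comm \<sigma>"
  have "F k x = 0" if "k \<noteq> 0" for k
    using Comm_coeff_vanishes[OF F interior_Fix_not_Per[OF assms(1) that]] .
  then show "psi \<sigma> (x,z) F = omega1 \<sigma> x F"
    unfolding psi_apply[OF F] by (subst infsum_single[where a=0]) (auto simp: omega1_def F)
qed

lemma fibre_psi_not_Per:
  assumes xP: "x \<notin> Per \<sigma>"
  shows "{p \<in> topspace XT. psi \<sigma> p = omega1 \<sigma> x} = {x} \<times> sphere 0 1"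
proof -
  have "y = x" if "psi \<sigma> (y,z) = omega1 \<sigma> x" for y z
  proof (rule psi_emb_eq_point[of y z])
    fix f :: "'a \<Rightarrow> complex" assume "continuous_on UNIV f"
    then show "psi \<sigma> (y,z) (emb f) = f x" by (simp add: that omega1_def emb_Comm) (simp add: emb_def)
  qed
  then show ?thesis using psi_eq_omega1[OF xP] by (auto simp: topspace_XT)
qed

text \<open>At a point of Per only the exponents k = j n contribute, and z^k = (z^n)^j.\<close>

lemma psi_eq_omega2:
  assumes xP: "x \<in> Per \<sigma>" and z: "z \<in> sphere 0 1"
  shows "psi \<sigma> (x,z) = omega2 \<sigma> x (z ^ nmin \<sigma> x)"
proof (rule extensionalityI[OF character_extensional[OF psi_in_characters[OF z]]])
  show "omega2 \<sigma> x (z ^ nmin \<sigma> x) \<in> extensional (Comm \<sigma>)" by (simp add: omega2_def)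
  fix F assume F: "F \<in> Comm \<sigma>"
  define n where "n = nmin \<sigma> x"
  have "F k x = 0" if "k \<notin> range (\<lambda>j. j * int n)" for k
  proof (rule Comm_coeff_vanishes[OF F])
    show "x \<notin> interior (Fix \<sigma> k)"
      using nmin_dvd[OF xP, of k] that by (auto simp: n_def dvd_def mult.commute)
  qed
  then have "psi \<sigma> (x,z) F = infsum (\<lambda>k. F k x * z powi k) (range (\<lambda>j. j * int n))"
    unfolding psi_apply[OF F] by (intro infsum_cong_neutral) auto
  also have "\<dots> = infsum (\<lambda>j. F (j * int n) x * z powi (j * int n)) UNIV"
    using nmin_ge_1[OF xP] by (subst infsum_reindex) (auto simp: inj_def n_def o_def)
  also have "\<dots> = infsum (\<lambda>j. F (j * int n) x * (z ^ n) powi j) UNIV"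
    by (rule infsum_cong) (simp add: mult.commute[of _ "int n"] power_int_mult)
  finally show "psi \<sigma> (x,z) F = omega2 \<sigma> x (z ^ nmin \<sigma> x) F" by (simp add: omega2_def F n_def)
qed

lemma fibre_psi_Per:
  assumes xP: "x \<in> Per \<sigma>"
  shows "{p \<in> topspace XT. psi \<sigma> p = omega2 \<sigma> x c} = {(x, z) | z. z \<in> sphere 0 1 \<and> z ^ nmin \<sigma> x = c}"
proof -
  define n where "n = nmin \<sigma> x"
  have n1: "1 \<le> n" using nmin_ge_1[OF xP] by (simp add: n_def)
  obtain u where u: "continuous_on UNIV u" "\<And>y. cmod (u y) \<le> 1" "u x = 1"
    "\<And>y. u y \<noteq> 0 \<Longrightarrow> y \<in> interior (Fix \<sigma> (int n))"
    using bump_function[OF open_interior interior_Fix_nmin[OF xP]] unfolding n_def by blast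
  have U: "monomial u (int n) \<in> Comm \<sigma>" by (rule monomial_Comm_interior[OF u(1) u(4)])
  have omega2_U: "omega2 \<sigma> x w (monomial u (int n)) = w" for w
    unfolding omega2_def using U n1 u(3)
    by (simp, subst infsum_single[where a=1]) (auto simp: monomial_def n_def)
  have omega2_emb: "omega2 \<sigma> x w (emb f) = f x" if "continuous_on UNIV f" for f w
    unfolding omega2_def using emb_Comm[OF that] n1
    by (simp, subst infsum_single[where a=0]) (auto simp: emb_def n_def)
  have psi_U: "psi \<sigma> (x,z) (monomial u (int n)) = z ^ n" for z
    using psi_monomial[OF U] u(3) by simp
  have "y = x \<and> z ^ n = c" if eq: "psi \<sigma> (y,z) = omega2 \<sigma> x c" for y z
  proof
    show "y = x" using psi_emb_eq_point[of y z x] eq omega2_emb by simp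
    then show "z ^ n = c" using psi_U[of z] omega2_U[of c] eq by simp
  qed
  then show ?thesis using psi_eq_omega2[OF xP] by (auto simp: topspace_XT n_def)
qed

end

theorem theorem3p10:
  fixes \<sigma> :: "'a::t2_space \<Rightarrow> 'a"
  assumes "compact (UNIV :: 'a set)"
    and "bij \<sigma>" and "continuous_on UNIV \<sigma>" and "continuous_on UNIV (inv \<sigma>)"
  shows "continuous_map XT (gelfand_top \<sigma>) (psi \<sigma>)
    \<and> psi \<sigma> ` topspace XT = characters \<sigma>
    \<and> quotient_map XT (gelfand_top \<sigma>) (psi \<sigma>)
    \<and> (\<forall>x. x \<notin> Per \<sigma> \<longrightarrow>
           {p \<in> topspace XT. psi \<sigma> p = omega1 \<sigma> x} = {x} \<times> sphere 0 1)
    \<and> (\<forall>x c. x \<in> Per \<sigma> \<and> c \<in> sphere 0 1 \<longrightarrow>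
           {p \<in> topspace XT. psi \<sigma> p = omega2 \<sigma> x c} =
           {(x, z) | z. z \<in> sphere 0 1 \<and> z ^ nmin \<sigma> x = c})"
proof -
  interpret compact_bijective_map \<sigma>
    using assms(1,2) by unfold_locales
  show ?thesis
    using continuous_map_psi psi_image quotient_map_psi fibre_psi_not_Per fibre_psi_Per by blast
qed

end
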